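(* Let $G$ be a (finite or infinite) group with identity $\mathbf{1}$. If $G$ is not a hamiltonian $2$-group, then the complete graph $\mathrm{Cay}(G; G\setminus\{\mathbf{1}\})$ is strongly CCA.
   Context: A hamiltonian $2$-group is a group isomorphic to $Q_8\times B$, where $Q_8$ is the quaternion group of order $8$ and $B$ is an abelian group with $b^2=\mathbf{1}$ for all $b\in B$. For an inverse-closed subset $S$ of $G$, $\mathrm{Cay}(G;S)$ has vertex set $G$ and an edge from $g$ to $gs$ for each $g\in G$, $s\in S$; the edge $g$—$gs$ is coloured $\{s,s^{-1}\}$. A graph automorphism is colour-permuting if whenever two edges have the same colour their images also have the same colour. A map $\varphi\colon G\to G$ is affine if $\varphi(x)=\alpha(gx)$ for some $\alpha\in\mathrm{Aut}(G)$, $g\in G$. The Cayley graph is strongly CCA if every colour-permuting automorphism of it is affine. *)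

theory Defs
  imports "HOL-Algebra.Algebra"
begin

datatype qunit = QOne | QI | QJ | QK

fun qunit_mult :: "qunit \<Rightarrow> qunit \<Rightarrow> bool \<times> qunit" where
  "qunit_mult QOne x = (False, x)"
| "qunit_mult x QOne = (False, x)"
| "qunit_mult QI QI = (True, QOne)"
| "qunit_mult QJ QJ = (True, QOne)"
| "qunit_mult QK QK = (True, QOne)"
| "qunit_mult QI QJ = (False, QK)"
| "qunit_mult QJ QK = (False, QI)"
| "qunit_mult QK QI = (False, QJ)"
| "qunit_mult QJ QI = (True, QK)"
| "qunit_mult QK QJ = (True, QI)"
| "qunit_mult QI QK = (True, QJ)"

text \<open>Elements of Q8 are pairs (s, u) standing for (-1)^s u.\<close>
fun q8_mult :: "bool \<times> qunit \<Rightarrow> bool \<times> qunit \<Rightarrow> bool \<times> qunit" where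
  "q8_mult (s, a) (t, b) = (s \<noteq> (t \<noteq> fst (qunit_mult a b)), snd (qunit_mult a b))"

definition Q8 :: "(bool \<times> qunit) monoid" where
  "Q8 = \<lparr> carrier = UNIV, monoid.mult = q8_mult, one = (False, QOne) \<rparr>"

text \<open>G is isomorphic to Q8 x B with B abelian and b^2 = 1 for all b in B.
  Since such a B embeds into G, it may be taken with elements of the same type as G.\<close>
definition hamiltonian_2group :: "('a, 'c) monoid_scheme \<Rightarrow> bool" where
  "hamiltonian_2group G \<longleftrightarrow>
     (\<exists>B :: 'a monoid. comm_group B \<and> (\<forall>b\<in>carrier B. b \<otimes>\<^bsub>B\<^esub> b = \<one>\<^bsub>B\<^esub>)
        \<and> G \<cong> Q8 \<times>\<times> B)"

definition cay_adj :: "('a, 'c) monoid_scheme \<Rightarrow> 'a set \<Rightarrow> 'a \<Rightarrow> 'a \<Rightarrow> bool" where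
  "cay_adj G S g h \<longleftrightarrow> g \<in> carrier G \<and> h \<in> carrier G \<and> (\<exists>s\<in>S. h = g \<otimes>\<^bsub>G\<^esub> s)"

definition cay_colour :: "('a, 'c) monoid_scheme \<Rightarrow> 'a \<Rightarrow> 'a \<Rightarrow> 'a set" where
  "cay_colour G g h = {inv\<^bsub>G\<^esub> g \<otimes>\<^bsub>G\<^esub> h, inv\<^bsub>G\<^esub> (inv\<^bsub>G\<^esub> g \<otimes>\<^bsub>G\<^esub> h)}"

definition cay_graph_aut :: "('a, 'c) monoid_scheme \<Rightarrow> 'a set \<Rightarrow> ('a \<Rightarrow> 'a) \<Rightarrow> bool" where
  "cay_graph_aut G S \<phi> \<longleftrightarrow> bij_betw \<phi> (carrier G) (carrier G) \<and>
     (\<forall>g\<in>carrier G. \<forall>h\<in>carrier G. cay_adj G S g h \<longleftrightarrow> cay_adj G S (\<phi> g) (\<phi> h))"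

definition colour_permuting :: "('a, 'c) monoid_scheme \<Rightarrow> 'a set \<Rightarrow> ('a \<Rightarrow> 'a) \<Rightarrow> bool" where
  "colour_permuting G S \<phi> \<longleftrightarrow>
     (\<forall>g h g' h'. cay_adj G S g h \<and> cay_adj G S g' h' \<and> cay_colour G g h = cay_colour G g' h'
        \<longrightarrow> cay_colour G (\<phi> g) (\<phi> h) = cay_colour G (\<phi> g') (\<phi> h'))"

definition affine_map :: "('a, 'c) monoid_scheme \<Rightarrow> ('a \<Rightarrow> 'a) \<Rightarrow> bool" where
  "affine_map G \<phi> \<longleftrightarrow> (\<exists>\<alpha> g. \<alpha> \<in> iso G G \<and> g \<in> carrier G \<and>
      (\<forall>x\<in>carrier G. \<phi> x = \<alpha> (g \<otimes>\<^bsub>G\<^esub> x)))"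

definition strongly_CCA :: "('a, 'c) monoid_scheme \<Rightarrow> 'a set \<Rightarrow> bool" where
  "strongly_CCA G S \<longleftrightarrow>
     (\<forall>\<phi>. cay_graph_aut G S \<phi> \<and> colour_permuting G S \<phi> \<longrightarrow> affine_map G \<phi>)"

lemma group_Q8: "group Q8"
proof (rule groupI)
  fix x y z assume "x \<in> carrier Q8" "y \<in> carrier Q8" "z \<in> carrier Q8"
  show "x \<otimes>\<^bsub>Q8\<^esub> y \<otimes>\<^bsub>Q8\<^esub> z = x \<otimes>\<^bsub>Q8\<^esub> (y \<otimes>\<^bsub>Q8\<^esub> z)"
    unfolding Q8_def by (cases x; cases y; cases z) (auto, (case_tac b; case_tac ba; case_tac bb; simp)+)
next
  fix x assume "x \<in> carrier Q8"
  show "\<exists>y\<in>carrier Q8. y \<otimes>\<^bsub>Q8\<^esub> x = \<one>\<^bsub>Q8\<^esub>"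
  proof (cases x)
    case (Pair a b) then show ?thesis
      by (intro bexI[of _ "(if b = QOne then a else \<not> a, b)"]) (cases b; simp add: Q8_def)+
  qed
next
  fix x assume "x \<in> carrier Q8"
  then show "\<one>\<^bsub>Q8\<^esub> \<otimes>\<^bsub>Q8\<^esub> x = x" unfolding Q8_def by (cases x) auto
qed (auto simp: Q8_def)

end

theory Submission
  imports Defs
begin

text \<open>Normalise a colour-permuting automorphism \<open>\<phi>\<close> to \<open>F x = \<phi>(\<one>)\<inverse> \<phi>(x)\<close>. Since the edges
  \<open>\<one> -- s\<close> and \<open>g -- gs\<close> share the colour \<open>{s, s\<inverse>}\<close>, \<open>F(gs) = F(g) \<psi>\<^sub>g(F(s))\<close>, where each twist
  \<open>\<psi>\<^sub>g\<close> is colour-preserving: it maps every \<open>x\<close> to \<open>x\<close> or \<open>x\<inverse>\<close> and keeps the colour of every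
  edge. Unless any two elements of \<open>G\<close> commute or invert each other, such a map is the identity
  or inverts exactly the elements outside an index-2 subgroup \<open>A\<close> over which \<open>G\<close> is generalised
  dicyclic. Then \<open>g \<mapsto> \<psi>\<^sub>g\<close> is a homomorphism onto a group of order at most two, and a parity
  argument shows that a non-trivial twist forces every element of \<open>A\<close> to square to \<open>\<one>\<close> or \<open>z\<close>,
  so that any two elements commute or invert after all; in abelian groups a twist equal to
  inversion is excluded directly. So \<open>F\<close> is an automorphism and \<open>\<phi>\<close> is affine unless \<open>G\<close> is a
  non-abelian group in which any two elements commute or invert. Such a group is a hamiltonian
  2-group: two non-commuting elements \<open>i\<close>, \<open>j\<close> generate a copy of \<open>Q8\<close>, every element is a unit
  quaternion times an element of the centraliser \<open>C\<close> of \<open>i\<close> and \<open>j\<close>, which is an elementary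
  abelian 2-group, and a complement \<open>B\<close> of \<open>{\<one>, i\<^sup>2}\<close> in \<open>C\<close> gives \<open>G \<cong> Q8 \<times> B\<close>.\<close>

section \<open>Groups in which any two elements commute or invert\<close>

context group
begin

lemma m_inv_cancel_left [simp]: "x \<in> carrier G \<Longrightarrow> y \<in> carrier G \<Longrightarrow> x \<otimes> (inv x \<otimes> y) = y"
  by (simp add: m_assoc [symmetric])

lemma inv_m_cancel_left [simp]: "x \<in> carrier G \<Longrightarrow> y \<in> carrier G \<Longrightarrow> inv x \<otimes> (x \<otimes> y) = y"
  by (simp add: m_assoc [symmetric])

lemma inv_eq_self_iff: "x \<in> carrier G \<Longrightarrow> inv x = x \<longleftrightarrow> x \<otimes> x = \<one>"
  by (metis inv_equality r_inv)

lemma inv_eq_mult_if_sq: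
  assumes "x \<in> carrier G" "s \<in> carrier G" "x \<otimes> x = s" "s \<otimes> s = \<one>"
  shows "inv x = s \<otimes> x"
  using assms by (intro inv_equality) (simp_all add: m_assoc)

lemma commute_if_inverted:
  assumes x: "x \<in> carrier G" and a: "a \<in> carrier G" and b: "b \<in> carrier G"
    and xa: "x \<otimes> a = inv a \<otimes> x" and xb: "x \<otimes> b = inv b \<otimes> x" and xab: "x \<otimes> (a \<otimes> b) = inv (a \<otimes> b) \<otimes> x"
  shows "a \<otimes> b = b \<otimes> a"
proof -
  have "inv (a \<otimes> b) \<otimes> x = inv a \<otimes> inv b \<otimes> x"
    using x a b by (simp add: xab [symmetric] m_assoc [symmetric] xa) (simp add: m_assoc xb)
  then have "inv (a \<otimes> b) = inv (b \<otimes> a)" using x a b by (simp add: inv_mult_group)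
  then show ?thesis using a b by (metis inv_inv m_closed)
qed

definition commute_or_invert :: bool where
  "commute_or_invert \<longleftrightarrow> (\<forall>a\<in>carrier G. \<forall>b\<in>carrier G. a \<otimes> b = b \<otimes> a \<or> a \<otimes> b = inv b \<otimes> a)"

lemma mutually_inverting_sq:
  assumes a: "a \<in> carrier G" and b: "b \<in> carrier G"
    and ba: "b \<otimes> a = inv a \<otimes> b" and ab: "a \<otimes> b = inv b \<otimes> a"
  shows "a \<otimes> a = b \<otimes> b" and "a \<otimes> a \<otimes> (a \<otimes> a) = \<one>"
proof -
  have "b = inv b \<otimes> (a \<otimes> a)"
  proof -
    have "a \<otimes> b \<otimes> a = b" using ba a b by (simp add: m_assoc)
    moreover have "a \<otimes> b \<otimes> a = inv b \<otimes> (a \<otimes> a)" using ab a b by (simp add: m_assoc)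
    ultimately show ?thesis by simp
  qed
  then have "b \<otimes> b = b \<otimes> (inv b \<otimes> (a \<otimes> a))" by simp
  then show sq: "a \<otimes> a = b \<otimes> b" using a b by simp
  have "inv a \<otimes> inv a \<otimes> b = b \<otimes> (a \<otimes> a)"
    using ba a b by (simp add: m_assoc [symmetric]) (simp add: m_assoc)
  also have "\<dots> = a \<otimes> a \<otimes> b" using sq a b by (simp add: m_assoc)
  finally have "a \<otimes> a = inv a \<otimes> inv a" using a b by simp
  then have "a \<otimes> a \<otimes> (a \<otimes> a) = inv a \<otimes> inv a \<otimes> (a \<otimes> a)" by simp
  then show "a \<otimes> a \<otimes> (a \<otimes> a) = \<one>" using a by (simp add: m_assoc)
qed

lemma commutes_mult:
  assumes "a \<in> carrier G" "b \<in> carrier G" "x \<in> carrier G"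
    and "a \<otimes> x = x \<otimes> a" "b \<otimes> x = x \<otimes> b"
  shows "a \<otimes> b \<otimes> x = x \<otimes> (a \<otimes> b)"
  using assms by (metis m_assoc)

lemma sq_mult_inverted:
  assumes "x \<in> carrier G" "f \<in> carrier G" "x \<otimes> f = inv f \<otimes> x"
  shows "x \<otimes> f \<otimes> (x \<otimes> f) = x \<otimes> x"
proof -
  have "f \<otimes> (x \<otimes> f) = x" using assms by simp
  moreover have "x \<otimes> f \<otimes> (x \<otimes> f) = x \<otimes> (f \<otimes> (x \<otimes> f))" using assms(1,2) by (simp add: m_assoc)
  ultimately show ?thesis by simp
qed

end

section \<open>Non-abelian such groups are hamiltonian 2-groups\<close>

locale quaternion_pair = group G for G (structure) +
  fixes i j
  assumes commute_or_invert_G: commute_or_invert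
    and i_closed [simp]: "i \<in> carrier G" and j_closed [simp]: "j \<in> carrier G"
    and ij_noncomm: "i \<otimes> j \<noteq> j \<otimes> i"
begin

definition z where "z = i \<otimes> i"

lemma ji_inverted: "j \<otimes> i = inv i \<otimes> j"
  using commute_or_invert_G i_closed j_closed ij_noncomm unfolding commute_or_invert_def by metis

lemma ij_inverted: "i \<otimes> j = inv j \<otimes> i"
  using commute_or_invert_G i_closed j_closed ij_noncomm unfolding commute_or_invert_def by metis

lemma z_closed [simp]: "z \<in> carrier G"
  by (simp add: z_def)

lemma j_sq: "j \<otimes> j = z"
  using mutually_inverting_sq(1) [OF i_closed j_closed ji_inverted ij_inverted] by (simp add: z_def)

lemma z_sq: "z \<otimes> z = \<one>"
  using mutually_inverting_sq(2) [OF i_closed j_closed ji_inverted ij_inverted] by (simp add: z_def)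

lemma inv_z [simp]: "inv z = z"
  using z_sq by (metis inv_equality z_closed)

lemma inv_eq_z_mult: "x \<in> carrier G \<Longrightarrow> x \<otimes> x = z \<Longrightarrow> inv x = z \<otimes> x"
  using inv_eq_mult_if_sq z_sq z_closed by blast

lemma z_central: "g \<in> carrier G \<Longrightarrow> g \<otimes> z = z \<otimes> g"
proof -
  assume g: "g \<in> carrier G"
  have "g \<otimes> i = i \<otimes> g \<or> g \<otimes> i = inv i \<otimes> g"
    using commute_or_invert_G g unfolding commute_or_invert_def by simp
  then show ?thesis
  proof
    assume "g \<otimes> i = i \<otimes> g"
    then show ?thesis using g by (simp add: z_def m_assoc [symmetric]) (simp add: m_assoc)
  next
    assume gi: "g \<otimes> i = inv i \<otimes> g"
    have "g \<otimes> z = (g \<otimes> i) \<otimes> i" using g by (simp add: z_def m_assoc)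
    also have "\<dots> = inv i \<otimes> (g \<otimes> i)" using g by (simp add: gi m_assoc)
    also have "\<dots> = inv z \<otimes> g" using g by (simp add: gi z_def inv_mult_group m_assoc)
    finally show ?thesis by simp
  qed
qed

lemma z_neq_one: "z \<noteq> \<one>"
proof
  assume "z = \<one>"
  then have "inv i = i" using inv_eq_self_iff by (simp add: z_def)
  then show False using ji_inverted ij_noncomm by simp
qed

lemma q8_rules:
  "i \<otimes> i = z" "j \<otimes> j = z" "j \<otimes> i = z \<otimes> (i \<otimes> j)" "z \<otimes> z = \<one>"
  "i \<otimes> z = z \<otimes> i" "j \<otimes> z = z \<otimes> j" "inv i = z \<otimes> i" "inv j = z \<otimes> j"
proof -
  show "i \<otimes> i = z" by (simp add: z_def)
  show "j \<otimes> j = z" "z \<otimes> z = \<one>" by (fact j_sq z_sq)+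
  show "i \<otimes> z = z \<otimes> i" "j \<otimes> z = z \<otimes> j" by (simp_all add: z_central)
  show inv_i: "inv i = z \<otimes> i" "inv j = z \<otimes> j" by (simp_all add: inv_eq_z_mult j_sq z_def)
  show "j \<otimes> i = z \<otimes> (i \<otimes> j)" using ji_inverted by (simp add: inv_i m_assoc)
qed

lemma q8_rules_left:
  assumes "y \<in> carrier G"
  shows "i \<otimes> (i \<otimes> y) = z \<otimes> y" "j \<otimes> (j \<otimes> y) = z \<otimes> y"
    "j \<otimes> (i \<otimes> y) = z \<otimes> (i \<otimes> (j \<otimes> y))" "z \<otimes> (z \<otimes> y) = y"
    "i \<otimes> (z \<otimes> y) = z \<otimes> (i \<otimes> y)" "j \<otimes> (z \<otimes> y) = z \<otimes> (j \<otimes> y)"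
  using q8_rules assms by (simp_all add: m_assoc [symmetric])

lemma commute_or_z_commute:
  assumes "g \<in> carrier G" "x \<in> carrier G" "x \<otimes> x = z"
  shows "\<exists>s\<in>{\<one>, z}. g \<otimes> x = s \<otimes> (x \<otimes> g)"
proof -
  have "g \<otimes> x = x \<otimes> g \<or> g \<otimes> x = inv x \<otimes> g"
    using commute_or_invert_G assms unfolding commute_or_invert_def by simp
  then show ?thesis
  proof
    assume "g \<otimes> x = x \<otimes> g"
    then show ?thesis using assms(1,2) by auto
  next
    assume "g \<otimes> x = inv x \<otimes> g"
    then have "g \<otimes> x = z \<otimes> (x \<otimes> g)" using assms by (simp add: inv_eq_z_mult m_assoc)
    then show ?thesis by blast
  qed
qed

lemma inv_mult_commutes_if_same_sign:
  assumes s: "s \<in> {\<one>, z}" and g: "g \<in> carrier G" and y: "y \<in> carrier G" and x: "x \<in> carrier G"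
    and gx: "g \<otimes> x = s \<otimes> (x \<otimes> g)" and yx: "y \<otimes> x = s \<otimes> (x \<otimes> y)"
  shows "inv y \<otimes> g \<otimes> x = x \<otimes> (inv y \<otimes> g)"
proof -
  have sc: "s \<in> carrier G" and ss: "s \<otimes> s = \<one>" using s z_sq by auto
  have s_central: "w \<otimes> s = s \<otimes> w" if "w \<in> carrier G" for w
    using s z_central [OF that] that by auto
  have "y \<otimes> (s \<otimes> (x \<otimes> inv y)) = s \<otimes> (y \<otimes> x) \<otimes> inv y"
    using sc x y s_central[of y] by (simp add: m_assoc [symmetric])
  also have "\<dots> = x" using sc x y ss by (simp add: yx m_assoc [symmetric]) (simp add: m_assoc)
  finally have yinv_x: "inv y \<otimes> x = s \<otimes> (x \<otimes> inv y)"
    using sc x y by (simp add: inv_solve_left')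
  have "inv y \<otimes> g \<otimes> x = s \<otimes> (inv y \<otimes> x) \<otimes> g"
    using sc x y g s_central [of "inv y"] by (simp add: m_assoc gx) (simp add: m_assoc [symmetric])
  also have "\<dots> = x \<otimes> (inv y \<otimes> g)"
    using sc x y g ss by (simp add: yinv_x m_assoc [symmetric])
  finally show ?thesis .
qed

definition Cij where "Cij = {c \<in> carrier G. c \<otimes> i = i \<otimes> c \<and> c \<otimes> j = j \<otimes> c}"

lemma Cij_closed: "c \<in> Cij \<Longrightarrow> c \<in> carrier G"
  by (simp add: Cij_def)

lemma one_in_Cij: "\<one> \<in> Cij"
  by (simp add: Cij_def)

lemma z_in_Cij: "z \<in> Cij"
  by (simp add: Cij_def z_central)

lemma Cij_mult: "c \<in> Cij \<Longrightarrow> d \<in> Cij \<Longrightarrow> c \<otimes> d \<in> Cij"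
  by (simp add: Cij_def commutes_mult)

lemma Cij_sq:
  assumes c: "c \<in> Cij"
  shows "c \<otimes> c = \<one>"
proof -
  have cc: "c \<in> carrier G" and ci: "c \<otimes> i = i \<otimes> c" and cj: "c \<otimes> j = j \<otimes> c"
    using c by (auto simp: Cij_def)
  have ci_cj: "c \<otimes> i \<otimes> (c \<otimes> j) = c \<otimes> c \<otimes> (i \<otimes> j)" using cc
    by (simp add: m_assoc) (simp add: ci [symmetric] m_assoc [symmetric])
  have cj_ci: "c \<otimes> j \<otimes> (c \<otimes> i) = c \<otimes> c \<otimes> (j \<otimes> i)" using cc
    by (simp add: m_assoc) (simp add: cj [symmetric] m_assoc [symmetric])
  have "c \<otimes> i \<otimes> (c \<otimes> j) = c \<otimes> j \<otimes> (c \<otimes> i) \<or> c \<otimes> i \<otimes> (c \<otimes> j) = inv (c \<otimes> j) \<otimes> (c \<otimes> i)"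
    using commute_or_invert_G cc unfolding commute_or_invert_def by simp
  moreover have "c \<otimes> i \<otimes> (c \<otimes> j) \<noteq> c \<otimes> j \<otimes> (c \<otimes> i)"
    using ci_cj cj_ci ij_noncomm cc by simp
  moreover have "inv (c \<otimes> j) \<otimes> (c \<otimes> i) = \<one> \<otimes> (i \<otimes> j)"
    using cc by (simp add: inv_mult_group m_assoc ij_inverted)
  ultimately have "c \<otimes> c \<otimes> (i \<otimes> j) = \<one> \<otimes> (i \<otimes> j)" using ci_cj by simp
  then show ?thesis using cc by (metis m_closed one_closed right_cancel i_closed j_closed)
qed

lemma Cij_inv: "c \<in> Cij \<Longrightarrow> inv c = c"
  using Cij_sq Cij_closed inv_eq_self_iff by blast

lemma Cij_comm: "c \<in> Cij \<Longrightarrow> d \<in> Cij \<Longrightarrow> c \<otimes> d = d \<otimes> c"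
  using Cij_inv [of "c \<otimes> d"] Cij_inv [of c] Cij_inv [of d] Cij_mult Cij_closed
  by (metis inv_mult_group)

definition quat :: "qunit \<Rightarrow> 'a" where
  "quat u = (case u of QOne \<Rightarrow> \<one> | QI \<Rightarrow> i | QJ \<Rightarrow> j | QK \<Rightarrow> i \<otimes> j)"

lemma quat_closed [simp]: "quat u \<in> carrier G"
  by (cases u) (simp_all add: quat_def)

lemma quat_signs:
  assumes "s \<in> {\<one>, z}" and "t \<in> {\<one>, z}"
  shows "\<exists>u. quat u \<otimes> i = s \<otimes> (i \<otimes> quat u) \<and> quat u \<otimes> j = t \<otimes> (j \<otimes> quat u)"
proof -
  have "quat QOne \<otimes> i = \<one> \<otimes> (i \<otimes> quat QOne) \<and> quat QOne \<otimes> j = \<one> \<otimes> (j \<otimes> quat QOne)"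
    "quat QI \<otimes> i = \<one> \<otimes> (i \<otimes> quat QI) \<and> quat QI \<otimes> j = z \<otimes> (j \<otimes> quat QI)"
    "quat QJ \<otimes> i = z \<otimes> (i \<otimes> quat QJ) \<and> quat QJ \<otimes> j = \<one> \<otimes> (j \<otimes> quat QJ)"
    "quat QK \<otimes> i = z \<otimes> (i \<otimes> quat QK) \<and> quat QK \<otimes> j = z \<otimes> (j \<otimes> quat QK)"
    by (simp_all add: quat_def q8_rules q8_rules_left m_assoc)
  then show ?thesis using assms by blast
qed

lemma quat_Cij_decomposition:
  assumes g: "g \<in> carrier G"
  shows "\<exists>u. \<exists>c\<in>Cij. g = quat u \<otimes> c"
proof -
  obtain s where s: "s \<in> {\<one>, z}" "g \<otimes> i = s \<otimes> (i \<otimes> g)"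
    using commute_or_z_commute [OF g i_closed] q8_rules(1) by blast
  obtain t where t: "t \<in> {\<one>, z}" "g \<otimes> j = t \<otimes> (j \<otimes> g)"
    using commute_or_z_commute [OF g j_closed] q8_rules(2) by blast
  obtain u where u: "quat u \<otimes> i = s \<otimes> (i \<otimes> quat u)" "quat u \<otimes> j = t \<otimes> (j \<otimes> quat u)"
    using quat_signs [OF s(1) t(1)] by blast
  have "inv (quat u) \<otimes> g \<in> Cij"
    using inv_mult_commutes_if_same_sign [OF s(1) g quat_closed i_closed s(2) u(1)]
      inv_mult_commutes_if_same_sign [OF t(1) g quat_closed j_closed t(2) u(2)] g
    by (simp add: Cij_def)
  then show ?thesis using g by (intro exI [of _ u] bexI [of _ "inv (quat u) \<otimes> g"]) simp_all
qed

text \<open>Zorn's lemma gives a maximal submonoid of \<open>Cij\<close> avoiding \<open>z\<close>; since \<open>Cij\<close> is an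
  elementary abelian 2-group, it is a complement of \<open>{\<one>, z}\<close> in \<open>Cij\<close> (\<open>Cij_cover\<close>).\<close>

definition z_avoiding :: "'a set set" where
  "z_avoiding = {B. B \<subseteq> Cij \<and> \<one> \<in> B \<and> (\<forall>x\<in>B. \<forall>y\<in>B. x \<otimes> y \<in> B) \<and> z \<notin> B}"

lemma maximal_z_avoiding_exists: "\<exists>B\<in>z_avoiding. \<forall>W\<in>z_avoiding. B \<subseteq> W \<longrightarrow> W = B"
proof (rule Zorn_Lemma2, intro ballI)
  fix Ch assume Ch: "Ch \<in> chains z_avoiding"
  show "\<exists>U\<in>z_avoiding. \<forall>W\<in>Ch. W \<subseteq> U"
  proof (cases "Ch = {}")
    case True
    have "{\<one>} \<in> z_avoiding" using one_in_Cij z_neq_one by (auto simp: z_avoiding_def)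
    then show ?thesis using True by blast
  next
    case False
    have sub: "Ch \<subseteq> z_avoiding" and ch: "\<forall>W\<in>Ch. \<forall>V\<in>Ch. W \<subseteq> V \<or> V \<subseteq> W"
      using Ch by (auto simp: chains_def chain_subset_def)
    have "\<Union>Ch \<in> z_avoiding"
      unfolding z_avoiding_def
    proof (intro CollectI conjI ballI)
      show "\<Union>Ch \<subseteq> Cij" "z \<notin> \<Union>Ch" using sub by (auto simp: z_avoiding_def)
      show "\<one> \<in> \<Union>Ch" using sub False by (auto simp: z_avoiding_def)
      fix x y assume "x \<in> \<Union>Ch" and "y \<in> \<Union>Ch"
      then obtain W V where W: "W \<in> Ch" "x \<in> W" and V: "V \<in> Ch" "y \<in> V" by blast
      have closed: "x \<otimes> y \<in> U" if "U \<in> Ch" "x \<in> U" "y \<in> U" for U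
        using that sub by (auto simp: z_avoiding_def)
      show "x \<otimes> y \<in> \<Union>Ch"
        using ch W V closed [OF W(1)] closed [OF V(1)] by blast
    qed
    then show ?thesis by blast
  qed
qed

definition complement where
  "complement = (SOME B. B \<in> z_avoiding \<and> (\<forall>W\<in>z_avoiding. B \<subseteq> W \<longrightarrow> W = B))"

lemma complement_z_avoiding: "complement \<in> z_avoiding"
  and complement_maximal: "W \<in> z_avoiding \<Longrightarrow> complement \<subseteq> W \<Longrightarrow> W = complement"
  using someI_ex [OF maximal_z_avoiding_exists [unfolded Bex_def]]
  unfolding complement_def by blast+

lemma complement_Cij: "x \<in> complement \<Longrightarrow> x \<in> Cij"
  and one_in_complement: "\<one> \<in> complement"
  and complement_mult: "x \<in> complement \<Longrightarrow> y \<in> complement \<Longrightarrow> x \<otimes> y \<in> complement"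
  and z_notin_complement: "z \<notin> complement"
  using complement_z_avoiding by (auto simp: z_avoiding_def)

lemma complement_closed: "x \<in> complement \<Longrightarrow> x \<in> carrier G"
  using complement_Cij Cij_closed by blast

lemma z_avoiding_extend:
  assumes B: "B \<in> z_avoiding" and c: "c \<in> Cij" and zc: "\<forall>b\<in>B. c \<noteq> z \<otimes> b"
  shows "B \<union> (\<otimes>) c ` B \<in> z_avoiding"
proof -
  have BC: "B \<subseteq> Cij" and B_mult: "\<And>x y. x \<in> B \<Longrightarrow> y \<in> B \<Longrightarrow> x \<otimes> y \<in> B"
    using B by (auto simp: z_avoiding_def)
  have cc: "c \<in> carrier G" and cc1: "c \<otimes> c = \<one>" using c Cij_closed Cij_sq by auto
  have bc: "b \<in> carrier G" if "b \<in> B" for b using that BC Cij_closed by blast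
  have c_comm: "b \<otimes> c = c \<otimes> b" if "b \<in> B" for b using that BC c Cij_comm by blast
  have "x \<otimes> y \<in> B \<union> (\<otimes>) c ` B" if x: "x \<in> B \<union> (\<otimes>) c ` B" and y: "y \<in> B \<union> (\<otimes>) c ` B" for x y
  proof -
    obtain b1 where b1: "b1 \<in> B" "x = b1 \<or> x = c \<otimes> b1" using x by blast
    obtain b2 where b2: "b2 \<in> B" "y = b2 \<or> y = c \<otimes> b2" using y by blast
    have b12: "b1 \<otimes> b2 \<in> B" using B_mult b1(1) b2(1) .
    have swap: "b1 \<otimes> (c \<otimes> b2) = c \<otimes> (b1 \<otimes> b2)"
      using b1(1) b2(1) bc cc by (simp add: m_assoc [symmetric] c_comm)
    have "c \<otimes> b1 \<otimes> (c \<otimes> b2) = c \<otimes> (c \<otimes> (b1 \<otimes> b2))"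
      using b1(1) b2(1) bc cc by (simp add: m_assoc swap)
    also have "\<dots> = b1 \<otimes> b2" using b1(1) b2(1) bc cc cc1 by (simp add: m_assoc [symmetric])
    finally have cc_prod: "c \<otimes> b1 \<otimes> (c \<otimes> b2) = b1 \<otimes> b2" .
    have "b1 \<otimes> b2 \<in> B \<union> (\<otimes>) c ` B" "b1 \<otimes> (c \<otimes> b2) \<in> B \<union> (\<otimes>) c ` B"
      "c \<otimes> b1 \<otimes> b2 \<in> B \<union> (\<otimes>) c ` B" "c \<otimes> b1 \<otimes> (c \<otimes> b2) \<in> B \<union> (\<otimes>) c ` B"
      using b12 swap cc_prod b1(1) b2(1) bc cc by (auto simp: m_assoc)
    then show ?thesis using b1(2) b2(2) by blast
  qed
  moreover have "z \<notin> (\<otimes>) c ` B"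
  proof
    assume "z \<in> (\<otimes>) c ` B"
    then obtain b where b: "b \<in> B" "z = c \<otimes> b" by blast
    then have "c = z \<otimes> inv b" using cc bc [OF b(1)] by (simp add: m_assoc)
    then show False using zc b BC Cij_inv by auto
  qed
  ultimately show ?thesis
    using B c BC Cij_mult by (auto simp: z_avoiding_def)
qed

lemma Cij_cover:
  assumes c: "c \<in> Cij"
  shows "c \<in> complement \<or> (\<exists>b\<in>complement. c = z \<otimes> b)"
proof (rule ccontr)
  assume "\<not> ?thesis"
  then have "c \<notin> complement" and "\<forall>b\<in>complement. c \<noteq> z \<otimes> b" by auto
  let ?B = "complement \<union> (\<otimes>) c ` complement"
  have "?B = complement"
    using complement_maximal complement_Cij z_avoiding_extend [OF complement_z_avoiding c] \<open>\<forall>b\<in>complement. c \<noteq> z \<otimes> b\<close>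
    by blast
  moreover have "c \<in> ?B" using one_in_complement c Cij_closed by force
  ultimately show False using \<open>c \<notin> complement\<close> by blast
qed

definition complement_group :: "'a monoid" where
  "complement_group = \<lparr>carrier = complement, monoid.mult = (\<otimes>), one = \<one>\<rparr>"

lemma comm_group_complement_group: "comm_group complement_group"
proof (rule comm_groupI)
  fix x y w
  assume x: "x \<in> carrier complement_group" and y: "y \<in> carrier complement_group"
    and w: "w \<in> carrier complement_group"
  then show "x \<otimes>\<^bsub>complement_group\<^esub> y \<in> carrier complement_group"
    and "x \<otimes>\<^bsub>complement_group\<^esub> y \<otimes>\<^bsub>complement_group\<^esub> w = x \<otimes>\<^bsub>complement_group\<^esub> (y \<otimes>\<^bsub>complement_group\<^esub> w)"
    and "\<one>\<^bsub>complement_group\<^esub> \<otimes>\<^bsub>complement_group\<^esub> x = x"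
    using complement_mult complement_closed by (auto simp: complement_group_def m_assoc)
  show "x \<otimes>\<^bsub>complement_group\<^esub> y = y \<otimes>\<^bsub>complement_group\<^esub> x"
    using x y complement_Cij Cij_comm by (simp add: complement_group_def)
  show "\<exists>y\<in>carrier complement_group. y \<otimes>\<^bsub>complement_group\<^esub> x = \<one>\<^bsub>complement_group\<^esub>"
    using x complement_Cij Cij_sq by (intro bexI [of _ x]) (auto simp: complement_group_def)
qed (simp add: complement_group_def one_in_complement)

lemma complement_group_sq: "\<forall>b\<in>carrier complement_group. b \<otimes>\<^bsub>complement_group\<^esub> b = \<one>\<^bsub>complement_group\<^esub>"
  using complement_Cij Cij_sq by (auto simp: complement_group_def)

text \<open>The pair \<open>(s, u)\<close> of \<open>Q8\<close> stands for \<open>(-1)^s u\<close>, and \<open>z\<close> plays the role of \<open>-1\<close>.\<close>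

definition sign_elem :: "bool \<Rightarrow> 'a" where
  "sign_elem s = (if s then z else \<one>)"

lemma sign_elem_closed [simp]: "sign_elem s \<in> carrier G"
  by (simp add: sign_elem_def)

lemma sign_elem_mult: "sign_elem s \<otimes> sign_elem t = sign_elem (s \<noteq> t)"
  using z_sq by (simp add: sign_elem_def)

lemma sign_elem_Cij: "sign_elem s \<in> Cij"
  using z_in_Cij one_in_Cij by (simp add: sign_elem_def)

lemma sign_elem_central: "g \<in> carrier G \<Longrightarrow> g \<otimes> sign_elem s = sign_elem s \<otimes> g"
  using z_central by (simp add: sign_elem_def)

lemma quat_mult: "quat u \<otimes> quat v = sign_elem (fst (qunit_mult u v)) \<otimes> quat (snd (qunit_mult u v))"
  by (cases u; cases v) (simp_all add: quat_def sign_elem_def q8_rules q8_rules_left m_assoc)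

lemma Cij_comm_quat: "c \<in> Cij \<Longrightarrow> c \<otimes> quat v = quat v \<otimes> c"
  by (cases v) (simp_all add: quat_def Cij_def commutes_mult)

lemma quat_in_Cij: "quat u \<in> Cij \<Longrightarrow> u = QOne"
proof (cases u)
  case QK
  assume "quat u \<in> Cij"
  then have "i \<otimes> (j \<otimes> i) = i \<otimes> (i \<otimes> j)" using QK by (simp add: quat_def Cij_def m_assoc)
  then show ?thesis using ij_noncomm by simp
qed (use ij_noncomm in \<open>auto simp: quat_def Cij_def\<close>)

definition q8_prod_map :: "(bool \<times> qunit) \<times> 'a \<Rightarrow> 'a" where
  "q8_prod_map x = sign_elem (fst (fst x)) \<otimes> (quat (snd (fst x)) \<otimes> snd x)"

lemma q8_prod_map_mult:
  assumes b: "b \<in> complement" and b': "b' \<in> complement"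
  shows "q8_prod_map ((s, u), b) \<otimes> q8_prod_map ((t, v), b') = q8_prod_map (q8_mult (s, u) (t, v), b \<otimes> b')"
proof -
  have bc: "b \<in> carrier G" "b' \<in> carrier G" and bC: "b \<in> Cij"
    using b b' complement_closed complement_Cij by auto
  have move_b: "b \<otimes> (sign_elem t \<otimes> (quat v \<otimes> b')) = sign_elem t \<otimes> (quat v \<otimes> (b \<otimes> b'))"
  proof -
    have "b \<otimes> (sign_elem t \<otimes> (quat v \<otimes> b')) = (b \<otimes> sign_elem t) \<otimes> (quat v \<otimes> b')"
      using bc by (simp add: m_assoc)
    also have "\<dots> = sign_elem t \<otimes> ((b \<otimes> quat v) \<otimes> b')"
      using bc by (simp add: Cij_comm [OF bC sign_elem_Cij] m_assoc)
    also have "\<dots> = sign_elem t \<otimes> (quat v \<otimes> (b \<otimes> b'))"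
      using bc by (simp add: Cij_comm_quat [OF bC] m_assoc)
    finally show ?thesis .
  qed
  have "q8_prod_map ((s, u), b) \<otimes> q8_prod_map ((t, v), b')
      = sign_elem s \<otimes> (quat u \<otimes> (sign_elem t \<otimes> (quat v \<otimes> (b \<otimes> b'))))"
    using bc by (simp add: q8_prod_map_def m_assoc move_b)
  also have "\<dots> = (sign_elem s \<otimes> sign_elem t) \<otimes> ((quat u \<otimes> quat v) \<otimes> (b \<otimes> b'))"
    using bc sign_elem_central [of "quat u" t] by (simp add: m_assoc [symmetric])
  also have "\<dots> = sign_elem ((s \<noteq> t) \<noteq> fst (qunit_mult u v)) \<otimes> (quat (snd (qunit_mult u v)) \<otimes> (b \<otimes> b'))"
    using bc by (simp add: quat_mult sign_elem_mult m_assoc [symmetric])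
  also have "\<dots> = q8_prod_map (q8_mult (s, u) (t, v), b \<otimes> b')"
  proof -
    have "((s \<noteq> t) \<noteq> fst (qunit_mult u v)) = (s \<noteq> (t \<noteq> fst (qunit_mult u v)))" by auto
    then show ?thesis by (simp add: q8_prod_map_def)
  qed
  finally show ?thesis .
qed

lemma q8_prod_map_hom: "q8_prod_map \<in> hom (Q8 \<times>\<times> complement_group) G"
proof (rule homI)
  fix x assume "x \<in> carrier (Q8 \<times>\<times> complement_group)"
  then show "q8_prod_map x \<in> carrier G"
    using complement_closed by (auto simp: q8_prod_map_def complement_group_def)
next
  fix x y assume x: "x \<in> carrier (Q8 \<times>\<times> complement_group)" and y: "y \<in> carrier (Q8 \<times>\<times> complement_group)"
  obtain s u b t v b' where "x = ((s, u), b)" "y = ((t, v), b')" by (metis prod.collapse)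
  with x y show "q8_prod_map (x \<otimes>\<^bsub>Q8 \<times>\<times> complement_group\<^esub> y) = q8_prod_map x \<otimes> q8_prod_map y"
    using q8_prod_map_mult by (simp add: Q8_def complement_group_def)
qed

lemma group_complement_group: "group complement_group"
  using comm_group_complement_group comm_group.axioms(2) by blast

lemma q8_prod_map_inj: "inj_on q8_prod_map (carrier (Q8 \<times>\<times> complement_group))"
proof -
  interpret h: group_hom "Q8 \<times>\<times> complement_group" G q8_prod_map
    using DirProd_group [OF group_Q8 group_complement_group] q8_prod_map_hom
    by (simp add: group_hom_def group_hom_axioms_def is_group)
  have "x = \<one>\<^bsub>Q8 \<times>\<times> complement_group\<^esub>" if x: "x \<in> kernel (Q8 \<times>\<times> complement_group) G q8_prod_map" for x
  proof -
    obtain s u b where xe: "x = ((s, u), b)" by (metis prod.collapse)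
    have b: "b \<in> complement" using x xe by (auto simp: kernel_def complement_group_def)
    have bc: "b \<in> carrier G" and bC: "b \<in> Cij" using b complement_closed complement_Cij by auto
    have e: "sign_elem s \<otimes> (quat u \<otimes> b) = \<one>" using x xe by (simp add: kernel_def q8_prod_map_def)
    then have "quat u = inv (sign_elem s \<otimes> b)"
      using bc sign_elem_central [of "quat u" s] by (metis inv_equality m_assoc m_closed quat_closed sign_elem_closed)
    also have "\<dots> = sign_elem s \<otimes> b"
      using Cij_inv Cij_mult [OF sign_elem_Cij bC] by blast
    finally have "u = QOne" using quat_in_Cij Cij_mult [OF sign_elem_Cij bC] by simp
    then have "sign_elem s = inv b" using e bc by (simp add: quat_def inv_equality)
    then have "sign_elem s = b" using Cij_inv [OF bC] by simp
    then have "\<not> s" "b = \<one>" using b z_notin_complement by (auto simp: sign_elem_def split: if_splits)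
    then show ?thesis using xe \<open>u = QOne\<close> by (simp add: Q8_def complement_group_def)
  qed
  then have "kernel (Q8 \<times>\<times> complement_group) G q8_prod_map = {\<one>\<^bsub>Q8 \<times>\<times> complement_group\<^esub>}"
    using subgroup.one_closed [OF h.subgroup_kernel] by blast
  then show ?thesis using h.inj_iff_trivial_ker by simp
qed

lemma q8_prod_map_surj: "q8_prod_map ` carrier (Q8 \<times>\<times> complement_group) = carrier G"
proof
  show "q8_prod_map ` carrier (Q8 \<times>\<times> complement_group) \<subseteq> carrier G"
    using q8_prod_map_hom hom_carrier by blast
  show "carrier G \<subseteq> q8_prod_map ` carrier (Q8 \<times>\<times> complement_group)"
  proof
    fix g assume g: "g \<in> carrier G"
    obtain u c where c: "c \<in> Cij" and ge: "g = quat u \<otimes> c"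
      using quat_Cij_decomposition [OF g] by blast
    obtain s b where b: "b \<in> complement" and "c = sign_elem s \<otimes> b"
      using Cij_cover [OF c] by (metis sign_elem_def l_one one_in_complement complement_closed)
    then have "q8_prod_map ((s, u), b) = g"
      using ge complement_closed sign_elem_central [of "quat u" s]
      by (simp add: q8_prod_map_def m_assoc [symmetric])
    moreover have "((s, u), b) \<in> carrier (Q8 \<times>\<times> complement_group)"
      using b by (simp add: Q8_def complement_group_def)
    ultimately show "g \<in> q8_prod_map ` carrier (Q8 \<times>\<times> complement_group)" by force
  qed
qed

theorem is_hamiltonian_2group: "hamiltonian_2group G"
proof -
  have "q8_prod_map \<in> iso (Q8 \<times>\<times> complement_group) G"
    using q8_prod_map_hom q8_prod_map_inj q8_prod_map_surj by (simp add: iso_def bij_betw_def)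
  then have "G \<cong> Q8 \<times>\<times> complement_group"
    using group.iso_set_sym [OF DirProd_group [OF group_Q8 group_complement_group]] is_isoI by blast
  then show ?thesis
    unfolding hamiltonian_2group_def using comm_group_complement_group complement_group_sq by blast
qed

end

lemma (in group) hamiltonian_if_commute_or_invert:
  assumes "commute_or_invert" and "\<not> (\<forall>a\<in>carrier G. \<forall>b\<in>carrier G. a \<otimes> b = b \<otimes> a)"
  shows "hamiltonian_2group G"
proof -
  obtain i j where "i \<in> carrier G" "j \<in> carrier G" "i \<otimes> j \<noteq> j \<otimes> i" using assms(2) by blast
  then interpret quaternion_pair G i j using assms(1) by unfold_locales
  show ?thesis by (rule is_hamiltonian_2group)
qed

section \<open>Generalised dicyclic groups\<close>

definition (in group) invert_outside :: "'a set \<Rightarrow> 'a \<Rightarrow> 'a" where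
  "invert_outside A x = (if x \<in> A then x else inv x)"

locale gen_dicyclic = group G for G (structure) +
  fixes A z
  assumes A_subgroup: "subgroup A G"
    and z_neq_one: "z \<noteq> \<one>"
    and A_proper: "\<exists>x\<in>carrier G. x \<notin> A"
    and outside_mult: "\<lbrakk>x \<in> carrier G; x \<notin> A; y \<in> carrier G; y \<notin> A\<rbrakk> \<Longrightarrow> x \<otimes> y \<in> A"
    and outside_sq: "\<lbrakk>x \<in> carrier G; x \<notin> A\<rbrakk> \<Longrightarrow> x \<otimes> x = z"
    and outside_inverts: "\<lbrakk>x \<in> carrier G; x \<notin> A; a \<in> A\<rbrakk> \<Longrightarrow> x \<otimes> a = inv a \<otimes> x"
begin

lemma A_closed: "a \<in> A \<Longrightarrow> a \<in> carrier G"
  using subgroup.mem_carrier [OF A_subgroup] .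

lemma inv_in_A_iff: "x \<in> carrier G \<Longrightarrow> inv x \<in> A \<longleftrightarrow> x \<in> A"
  using subgroup.m_inv_closed [OF A_subgroup] by (metis inv_inv)

lemma mult_in_A_iff:
  assumes x: "x \<in> carrier G" and y: "y \<in> carrier G"
  shows "x \<otimes> y \<in> A \<longleftrightarrow> (x \<in> A \<longleftrightarrow> y \<in> A)"
proof -
  have "y \<in> A" if "x \<in> A" "x \<otimes> y \<in> A"
    using subgroup.m_closed [OF A_subgroup subgroup.m_inv_closed [OF A_subgroup \<open>x \<in> A\<close>] \<open>x \<otimes> y \<in> A\<close>]
      x y by simp
  moreover have "x \<in> A" if "y \<in> A" "x \<otimes> y \<in> A"
    using subgroup.m_closed [OF A_subgroup \<open>x \<otimes> y \<in> A\<close> subgroup.m_inv_closed [OF A_subgroup \<open>y \<in> A\<close>]]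
      x y by (simp add: m_assoc)
  ultimately show ?thesis
    using subgroup.m_closed [OF A_subgroup] outside_mult x y by blast
qed

lemma z_in_A: "z \<in> A"
  using A_proper outside_mult outside_sq by metis

lemma z_closed [simp]: "z \<in> carrier G"
  using A_closed z_in_A by blast

lemma z_sq: "z \<otimes> z = \<one>"
proof -
  obtain x where x: "x \<in> carrier G" "x \<notin> A" using A_proper by blast
  have "x \<otimes> z = z \<otimes> x" using outside_sq [OF x] x by (metis m_assoc)
  then have "inv z = z" using outside_inverts [OF x z_in_A] x by simp
  then show ?thesis using inv_eq_self_iff by simp
qed

lemma inv_eq_z_mult: "x \<in> carrier G \<Longrightarrow> x \<otimes> x = z \<Longrightarrow> inv x = z \<otimes> x"
  using inv_eq_mult_if_sq z_sq z_closed by blast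

lemma inv_outside: "x \<in> carrier G \<Longrightarrow> x \<notin> A \<Longrightarrow> inv x = z \<otimes> x"
  using outside_sq inv_eq_z_mult by blast

lemma z_central: "g \<in> carrier G \<Longrightarrow> g \<otimes> z = z \<otimes> g"
proof (cases "g \<in> A")
  case True
  assume g: "g \<in> carrier G"
  obtain x where x: "x \<in> carrier G" "x \<notin> A" using A_proper by blast
  have "z \<otimes> g = x \<otimes> (x \<otimes> g)" using outside_sq [OF x] x g by (simp add: m_assoc [symmetric])
  also have "\<dots> = (x \<otimes> inv g) \<otimes> x" using outside_inverts [OF x True] x g by (simp add: m_assoc)
  also have "\<dots> = g \<otimes> z"
    using outside_inverts [OF x subgroup.m_inv_closed [OF A_subgroup True]] outside_sq [OF x] x g
    by (simp add: m_assoc)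
  finally show ?thesis by simp
next
  case False
  assume g: "g \<in> carrier G"
  have "g \<otimes> (g \<otimes> g) = g \<otimes> g \<otimes> g" using g by (simp add: m_assoc)
  then show ?thesis using outside_sq [OF g False] by simp
qed

lemma A_comm:
  assumes a: "a \<in> A" and b: "b \<in> A"
  shows "a \<otimes> b = b \<otimes> a"
proof -
  obtain x where x: "x \<in> carrier G" "x \<notin> A" using A_proper by blast
  show ?thesis
    using commute_if_inverted [OF x(1) A_closed [OF a] A_closed [OF b]] outside_inverts [OF x]
      a b subgroup.m_closed [OF A_subgroup a b] by blast
qed

lemma invert_outside_closed [simp]: "x \<in> carrier G \<Longrightarrow> invert_outside A x \<in> carrier G"
  by (simp add: invert_outside_def)

lemma invert_outside_in_A_iff: "x \<in> carrier G \<Longrightarrow> invert_outside A x \<in> A \<longleftrightarrow> x \<in> A"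
  by (simp add: invert_outside_def inv_in_A_iff)

lemma invert_outside_involutive: "x \<in> carrier G \<Longrightarrow> invert_outside A (invert_outside A x) = x"
  by (simp add: invert_outside_def inv_in_A_iff)

lemma invert_outside_neq: "x \<in> carrier G \<Longrightarrow> x \<notin> A \<Longrightarrow> invert_outside A x \<noteq> x"
  using inv_eq_self_iff outside_sq z_neq_one by (simp add: invert_outside_def)

lemma invert_outside_mult:
  assumes x: "x \<in> carrier G" and y: "y \<in> carrier G"
  shows "invert_outside A (x \<otimes> y) = invert_outside A x \<otimes> invert_outside A y"
proof -
  have "inv (x \<otimes> y) = x \<otimes> inv y" if "x \<in> A" "y \<notin> A"
    using outside_inverts [OF inv_closed [OF y] _ subgroup.m_inv_closed [OF A_subgroup \<open>x \<in> A\<close>]]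
      that x y inv_in_A_iff by (simp add: inv_mult_group)
  moreover have "inv (x \<otimes> y) = inv x \<otimes> y" if "x \<notin> A" "y \<in> A"
    using outside_inverts [OF inv_closed [OF x] _ \<open>y \<in> A\<close>] that x y inv_in_A_iff
    by (simp add: inv_mult_group)
  moreover have "x \<otimes> y = inv x \<otimes> inv y" if "x \<notin> A" "y \<notin> A"
  proof -
    have "inv x \<otimes> inv y = z \<otimes> (x \<otimes> z) \<otimes> y"
      using inv_outside [OF x \<open>x \<notin> A\<close>] inv_outside [OF y \<open>y \<notin> A\<close>] x y by (simp add: m_assoc)
    also have "\<dots> = x \<otimes> y" using z_central [OF x] z_sq x y by (simp add: m_assoc [symmetric])
    finally show ?thesis by simp
  qed
  ultimately show ?thesis
    using mult_in_A_iff [OF x y] x y by (auto simp: invert_outside_def)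
qed

lemma A_maximal:
  assumes H: "subgroup H G" and AH: "A \<subseteq> H" and HG: "H \<noteq> carrier G"
  shows "H = A"
proof -
  have "u \<in> A" if u: "u \<in> H" for u
  proof (rule ccontr)
    assume "u \<notin> A"
    have "\<not> carrier G \<subseteq> H" using HG subgroup.subset [OF H] by (metis subset_antisym)
    then obtain y where y: "y \<in> carrier G" "y \<notin> H" by blast
    have uc: "u \<in> carrier G" using subgroup.mem_carrier [OF H u] .
    have "u \<otimes> y \<in> H" using outside_mult [OF uc \<open>u \<notin> A\<close> y(1)] y AH by blast
    then have "inv u \<otimes> (u \<otimes> y) \<in> H"
      using subgroup.m_closed [OF H subgroup.m_inv_closed [OF H u]] by blast
    then show False using y uc by simp
  qed
  then have "H \<subseteq> A" by blast
  then show ?thesis using AH by (rule subset_antisym)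
qed

lemma commute_or_invert_in_A_outside:
  assumes a: "a \<in> A" and b: "b \<in> carrier G" "b \<notin> A" and inv_a: "inv a = a \<or> inv a = z \<otimes> a"
  shows "a \<otimes> b = b \<otimes> a \<or> a \<otimes> b = inv b \<otimes> a"
proof -
  have ac: "a \<in> carrier G" using A_closed [OF a] .
  have ba: "b \<otimes> a = inv a \<otimes> b" using outside_inverts [OF b a] .
  from inv_a show ?thesis
  proof
    assume "inv a = z \<otimes> a"
    then have "z \<otimes> (b \<otimes> a) = a \<otimes> b" using ba ac b z_sq by (simp add: m_assoc [symmetric])
    then show ?thesis using inv_outside [OF b] ac b by (simp add: m_assoc)
  qed (use ba in simp)
qed

lemma commute_or_invert_outside_outside:
  assumes a: "a \<in> carrier G" "a \<notin> A" and b: "b \<in> carrier G" "b \<notin> A"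
    and inv_c: "inv (inv a \<otimes> b) = inv a \<otimes> b \<or> inv (inv a \<otimes> b) = z \<otimes> (inv a \<otimes> b)"
  shows "a \<otimes> b = b \<otimes> a \<or> a \<otimes> b = inv b \<otimes> a"
proof -
  define c where "c = inv a \<otimes> b"
  have cA: "c \<in> A" using mult_in_A_iff [of "inv a" b] inv_in_A_iff a b by (simp add: c_def)
  have cc: "c \<in> carrier G" and b_eq: "b = a \<otimes> c" using a b by (simp_all add: c_def)
  have ac: "a \<otimes> c = inv c \<otimes> a" using outside_inverts [OF a cA] .
  from inv_c [folded c_def] show ?thesis
  proof
    assume "inv c = c"
    then have "c \<otimes> a = a \<otimes> c" using ac by simp
    then have "b \<otimes> a = a \<otimes> b" using a cc by (simp add: b_eq m_assoc)
    then show ?thesis by simp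
  next
    assume "inv c = z \<otimes> c"
    moreover have "a \<otimes> b = z \<otimes> c" using outside_sq [OF a] a cc by (simp add: b_eq m_assoc [symmetric])
    moreover have "inv b \<otimes> a = inv c" using a cc by (simp add: b_eq inv_mult_group m_assoc)
    ultimately show ?thesis by simp
  qed
qed

lemma commute_or_invert_if_sq:
  assumes sq: "\<And>a. a \<in> A \<Longrightarrow> a \<otimes> a = \<one> \<or> a \<otimes> a = z"
  shows commute_or_invert
  unfolding commute_or_invert_def
proof (intro ballI)
  have inv_A: "inv a = a \<or> inv a = z \<otimes> a" if "a \<in> A" for a
    using sq [OF that] A_closed [OF that] inv_eq_self_iff inv_eq_z_mult by blast
  fix a b assume a: "a \<in> carrier G" and b: "b \<in> carrier G"
  consider "a \<in> A" "b \<in> A" | "a \<in> A" "b \<notin> A" | "a \<notin> A" "b \<in> A" | "a \<notin> A" "b \<notin> A" by blast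
  then show "a \<otimes> b = b \<otimes> a \<or> a \<otimes> b = inv b \<otimes> a"
  proof cases
    case 1
    then show ?thesis using A_comm by blast
  next
    case 2
    then show ?thesis using commute_or_invert_in_A_outside inv_A b by blast
  next
    case 3
    then show ?thesis using outside_inverts a by blast
  next
    case 4
    have "inv a \<otimes> b \<in> A" using mult_in_A_iff [of "inv a" b] inv_in_A_iff a b 4 by simp
    then show ?thesis using commute_or_invert_outside_outside a b 4 inv_A by blast
  qed
qed

lemma commute_or_invert_if_other:
  assumes other: "gen_dicyclic G A' z'" and ne: "A' \<noteq> A"
  shows commute_or_invert
proof -
  interpret other: gen_dicyclic G A' z' by (fact other)
  have "\<not> A \<subseteq> A'"
    using A_maximal [OF other.A_subgroup] other.A_proper ne by blast
  then obtain v where v: "v \<in> A" "v \<notin> A'" by blast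
  have "\<not> A' \<subseteq> A"
    using other.A_maximal [OF A_subgroup] A_proper ne by blast
  then obtain u where u: "u \<in> A'" "u \<notin> A" by blast
  have uc: "u \<in> carrier G" and vc: "v \<in> carrier G" using u v A_closed other.A_closed by auto
  have "u \<otimes> u = v \<otimes> v"
    using mutually_inverting_sq(1) [OF uc vc other.outside_inverts [OF vc v(2) u(1)]
        outside_inverts [OF uc u(2) v(1)]] .
  then have z_eq: "z' = z" using outside_sq [OF uc u(2)] other.outside_sq [OF vc v(2)] by simp
  have "a \<otimes> a = \<one> \<or> a \<otimes> a = z" if a: "a \<in> A" for a
  proof (cases "a \<in> A'")
    case True
    have "inv a \<otimes> u = a \<otimes> u"
      using outside_inverts [OF uc u(2) a] other.A_comm [OF u(1) True] by simp
    then show ?thesis using inv_eq_self_iff uc A_closed [OF a] by simp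
  next
    case False
    then show ?thesis using other.outside_sq A_closed [OF a] z_eq by simp
  qed
  then show ?thesis by (rule commute_or_invert_if_sq)
qed

end

section \<open>Colour-preserving maps\<close>

definition (in group) colour_preserving :: "('a \<Rightarrow> 'a) \<Rightarrow> bool" where
  "colour_preserving h \<longleftrightarrow> (\<forall>x\<in>carrier G. h x = x \<or> h x = inv x) \<and>
     (\<forall>a\<in>carrier G. \<forall>b\<in>carrier G. inv (h a) \<otimes> h (a \<otimes> b) = b \<or> inv (h a) \<otimes> h (a \<otimes> b) = inv b)"

locale colour_preserving_map = group G for G (structure) +
  fixes h
  assumes colour_preserving: "colour_preserving h"
begin

definition flipped where "flipped = {x \<in> carrier G. h x \<noteq> x}"

lemma flipped_closed: "x \<in> flipped \<Longrightarrow> x \<in> carrier G"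
  by (simp add: flipped_def)

lemma h_cases: "x \<in> carrier G \<Longrightarrow> h x = x \<or> h x = inv x"
  using colour_preserving unfolding colour_preserving_def by blast

lemma h_flipped: "x \<in> flipped \<Longrightarrow> h x = inv x"
  using h_cases unfolding flipped_def by blast

lemma h_fixed: "x \<notin> flipped \<Longrightarrow> x \<in> carrier G \<Longrightarrow> h x = x"
  by (simp add: flipped_def)

lemma flipped_not_involution: "x \<in> flipped \<Longrightarrow> x \<otimes> x \<noteq> \<one>"
proof -
  assume x: "x \<in> flipped"
  then have "inv x \<noteq> x" using h_flipped [OF x] by (simp add: flipped_def)
  then show ?thesis using inv_eq_self_iff flipped_closed [OF x] by simp
qed

lemma colour_step:
  assumes a: "a \<in> carrier G" and c: "c \<in> carrier G"
  shows "inv (h a) \<otimes> h c = inv a \<otimes> c \<or> inv (h a) \<otimes> h c = inv c \<otimes> a"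
proof -
  have "inv (h a) \<otimes> h (a \<otimes> (inv a \<otimes> c)) = inv a \<otimes> c \<or> inv (h a) \<otimes> h (a \<otimes> (inv a \<otimes> c)) = inv (inv a \<otimes> c)"
    using colour_preserving a c unfolding colour_preserving_def by blast
  then show ?thesis using a c by (simp add: inv_mult_group)
qed

lemma flipped_inverts:
  assumes x: "x \<in> flipped" and y: "y \<in> carrier G" "y \<notin> flipped"
  shows "x \<otimes> y = inv y \<otimes> x"
proof -
  have xc: "x \<in> carrier G" using flipped_closed [OF x] .
  have nx: "inv x \<noteq> x" using flipped_not_involution [OF x] inv_eq_self_iff [OF xc] by simp
  have "inv y \<otimes> inv x = inv y \<otimes> x \<or> inv y \<otimes> inv x = inv x \<otimes> y"
    using colour_step [OF y(1) xc] h_flipped [OF x] h_fixed [OF y(2,1)] by simp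
  then have "inv y \<otimes> inv x = inv x \<otimes> y" using nx xc y by simp
  then have "inv (inv y \<otimes> inv x) = inv (inv x \<otimes> y)" by simp
  then show ?thesis using xc y by (simp add: inv_mult_group)
qed

lemma inv_flipped_iff: "x \<in> carrier G \<Longrightarrow> inv x \<in> flipped \<longleftrightarrow> x \<in> flipped"
proof -
  have inv_flipped: "inv y \<in> flipped" if y: "y \<in> flipped" for y
  proof (rule ccontr)
    assume "inv y \<notin> flipped"
    then have "y \<otimes> inv y = y \<otimes> y"
      using flipped_inverts [OF y inv_closed [OF flipped_closed [OF y]]] flipped_closed [OF y] by simp
    then show False using flipped_not_involution [OF y] flipped_closed [OF y] by simp
  qed
  show "x \<in> carrier G \<Longrightarrow> ?thesis" using inv_flipped [of x] inv_flipped [of "inv x"] by auto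
qed

lemma flipped_pair:
  assumes x: "x \<in> flipped" and y: "y \<in> flipped"
  shows "x \<otimes> y = y \<otimes> x \<or> x \<otimes> x = y \<otimes> y"
proof -
  have xc: "x \<in> carrier G" and yc: "y \<in> carrier G" using x y flipped_closed by auto
  have "x \<otimes> inv y = inv x \<otimes> y \<or> x \<otimes> inv y = inv y \<otimes> x"
    using colour_step [OF xc yc] h_flipped [OF x] h_flipped [OF y] xc yc by simp
  then show ?thesis
  proof
    assume "x \<otimes> inv y = inv x \<otimes> y"
    then have "x \<otimes> (x \<otimes> inv y) \<otimes> y = x \<otimes> (inv x \<otimes> y) \<otimes> y" by simp
    then show ?thesis using xc yc by (simp add: m_assoc)
  next
    assume "x \<otimes> inv y = inv y \<otimes> x"
    then have "y \<otimes> (x \<otimes> inv y) \<otimes> y = y \<otimes> (inv y \<otimes> x) \<otimes> y" by simp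
    then show ?thesis using xc yc by (simp add: m_assoc)
  qed
qed

lemma flipped_not_commute:
  assumes x: "x \<in> flipped" and y: "y \<in> carrier G" "y \<notin> flipped" "y \<otimes> y \<noteq> \<one>"
  shows "x \<otimes> y \<noteq> y \<otimes> x"
proof
  assume "x \<otimes> y = y \<otimes> x"
  then have "inv y = y" using flipped_inverts [OF x y(1,2)] flipped_closed [OF x] y by simp
  then show False using y inv_eq_self_iff by simp
qed

lemma commute_or_invert_if_flipped_mult:
  assumes a: "a \<in> flipped" and b: "b \<in> carrier G" and ab: "a \<otimes> b \<in> flipped"
  shows "a \<otimes> b = b \<otimes> a \<or> a \<otimes> b = inv b \<otimes> a"
proof -
  have ac: "a \<in> carrier G" using flipped_closed [OF a] .
  have "a \<otimes> (a \<otimes> b) = a \<otimes> b \<otimes> a \<or> a \<otimes> a = a \<otimes> b \<otimes> (a \<otimes> b)" using flipped_pair [OF a ab] .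
  then show ?thesis
  proof
    assume "a \<otimes> (a \<otimes> b) = a \<otimes> b \<otimes> a"
    then show ?thesis using ac b by (simp add: m_assoc)
  next
    assume "a \<otimes> a = a \<otimes> b \<otimes> (a \<otimes> b)"
    then have "a = b \<otimes> (a \<otimes> b)" using ac b by (simp add: m_assoc)
    then show ?thesis using ac b inv_solve_left' [of "a \<otimes> b" b a] by simp
  qed
qed

lemma commute_or_invert_from_fixed:
  assumes fixed_flipped: "\<And>a b. \<lbrakk>a \<in> carrier G; a \<notin> flipped; b \<in> flipped\<rbrakk> \<Longrightarrow>
      a \<otimes> b = b \<otimes> a \<or> a \<otimes> b = inv b \<otimes> a"
    and fixed_fixed: "\<And>a b. \<lbrakk>a \<in> carrier G; a \<notin> flipped; b \<in> carrier G; b \<notin> flipped; a \<otimes> b \<notin> flipped\<rbrakk> \<Longrightarrow>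
      a \<otimes> b = b \<otimes> a \<or> a \<otimes> b = inv b \<otimes> a"
  shows commute_or_invert
  unfolding commute_or_invert_def
proof (intro ballI)
  fix a b assume a: "a \<in> carrier G" and b: "b \<in> carrier G"
  have ab: "a \<otimes> b \<in> carrier G" using a b by simp
  have inverts_if_right: "a \<otimes> b = inv b \<otimes> a" if "a \<otimes> b \<otimes> b = inv b \<otimes> (a \<otimes> b)"
    using that a b by (simp add: m_assoc [symmetric])
  consider "a \<in> flipped" "b \<notin> flipped" | "a \<in> flipped" "b \<in> flipped" "a \<otimes> b \<in> flipped"
    | "b \<in> flipped" "a \<otimes> b \<notin> flipped" | "a \<notin> flipped" "b \<in> flipped"
    | "b \<notin> flipped" "a \<otimes> b \<in> flipped" | "a \<notin> flipped" "b \<notin> flipped" "a \<otimes> b \<notin> flipped"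
    by blast
  then show "a \<otimes> b = b \<otimes> a \<or> a \<otimes> b = inv b \<otimes> a"
  proof cases
    case 1
    then show ?thesis using flipped_inverts b by blast
  next
    case 2
    then show ?thesis using commute_or_invert_if_flipped_mult b by blast
  next
    case 3
    have "a \<otimes> b \<otimes> b = b \<otimes> (a \<otimes> b) \<or> a \<otimes> b \<otimes> b = inv b \<otimes> (a \<otimes> b)"
      using fixed_flipped [OF ab 3(2,1)] .
    then show ?thesis
    proof
      assume "a \<otimes> b \<otimes> b = b \<otimes> (a \<otimes> b)"
      then show ?thesis using a b by (simp add: m_assoc [symmetric])
    qed (use inverts_if_right in blast)
  next
    case 4
    then show ?thesis using fixed_flipped a by blast
  next
    case 5
    then show ?thesis using flipped_inverts [OF 5(2) b 5(1)] inverts_if_right by blast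
  next
    case 6
    then show ?thesis using fixed_fixed a b by blast
  qed
qed

lemma commute_or_invert_if_fixed_involutions:
  assumes involution: "\<And>y. y \<in> carrier G \<Longrightarrow> y \<notin> flipped \<Longrightarrow> y \<otimes> y = \<one>"
  shows commute_or_invert
proof (rule commute_or_invert_from_fixed)
  fix a b assume a: "a \<in> carrier G" "a \<notin> flipped" and b: "b \<in> flipped"
  have "inv a = a" using involution [OF a] inv_eq_self_iff [OF a(1)] by simp
  then have "b \<otimes> a = a \<otimes> b" using flipped_inverts [OF b a] by simp
  then show "a \<otimes> b = b \<otimes> a \<or> a \<otimes> b = inv b \<otimes> a" by simp
next
  fix a b assume a: "a \<in> carrier G" "a \<notin> flipped" and b: "b \<in> carrier G" "b \<notin> flipped"
    and ab: "a \<otimes> b \<notin> flipped"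
  have "inv (a \<otimes> b) = a \<otimes> b" "inv a = a" "inv b = b"
    using involution [OF _ ab] involution [OF a] involution [OF b] a b inv_eq_self_iff by simp_all
  then show "a \<otimes> b = b \<otimes> a \<or> a \<otimes> b = inv b \<otimes> a" using a b by (simp add: inv_mult_group)
qed

context
  fixes y1 y2 w
  assumes y1: "y1 \<in> carrier G" "y1 \<notin> flipped" and y2: "y2 \<in> carrier G" "y2 \<notin> flipped"
    and w_def: "w = y1 \<otimes> y2" and w_flipped: "w \<in> flipped"
begin

lemma w_closed: "w \<in> carrier G"
  using flipped_closed [OF w_flipped] .

lemma y1_not_involution: "y1 \<otimes> y1 \<noteq> \<one>"
proof
  assume y1_inv: "y1 \<otimes> y1 = \<one>"
  have "y1 \<otimes> (y2 \<otimes> y1) = y2"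
    using flipped_inverts [OF w_flipped y1] y1 y2 by (simp add: w_def m_assoc)
  then have y21: "y2 \<otimes> y1 = inv y1 \<otimes> y2" using y1 y2 inv_solve_left by simp
  have "y1 \<otimes> y2 \<otimes> y2 = (inv y2 \<otimes> y1) \<otimes> y2"
    using flipped_inverts [OF w_flipped y2] y1 y2 by (simp add: w_def m_assoc)
  then have y12: "y1 \<otimes> y2 = inv y2 \<otimes> y1" using y1 y2 by simp
  have "y2 \<otimes> y2 = \<one>" using mutually_inverting_sq(1) [OF y1(1) y2(1) y21 y12] y1_inv by simp
  moreover have "w \<otimes> w = y1 \<otimes> (y2 \<otimes> y1) \<otimes> y2" using y1 y2 by (simp add: w_def m_assoc)
  ultimately have "w \<otimes> w = \<one>"
    using y21 y1_inv inv_eq_self_iff [OF y1(1)] y1 y2 by (simp add: m_assoc)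
  then show False using flipped_not_involution [OF w_flipped] by simp
qed

lemma inv_w_mult_commutes_fixed:
  assumes x: "x \<in> flipped" and y: "y \<in> carrier G" "y \<notin> flipped"
  shows "inv w \<otimes> x \<otimes> y = y \<otimes> (inv w \<otimes> x)"
proof -
  have xc: "x \<in> carrier G" using flipped_closed [OF x] .
  have "w \<otimes> inv y = y \<otimes> w"
    using flipped_inverts [OF w_flipped inv_closed [OF y(1)]] inv_flipped_iff y by simp
  then have "inv (w \<otimes> inv y) = inv (y \<otimes> w)" by simp
  then have winv: "inv w \<otimes> inv y = y \<otimes> inv w" using y w_closed by (simp add: inv_mult_group)
  have "inv w \<otimes> x \<otimes> y = inv w \<otimes> (inv y \<otimes> x)"
    using flipped_inverts [OF x y] xc y w_closed by (simp add: m_assoc)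
  also have "\<dots> = y \<otimes> (inv w \<otimes> x)"
    using winv xc y w_closed by (simp add: m_assoc [symmetric])
  finally show ?thesis .
qed

lemma inv_w_mult_flipped:
  assumes x: "x \<in> flipped"
  shows "inv w \<otimes> x \<otimes> (inv w \<otimes> x) = \<one>" and "inv w \<otimes> x \<otimes> w = w \<otimes> (inv w \<otimes> x)"
proof -
  define c where "c = inv w \<otimes> x"
  have cc: "c \<in> carrier G" using flipped_closed [OF x] w_closed by (simp add: c_def)
  have "c \<otimes> y1 = y1 \<otimes> c" "c \<otimes> y2 = y2 \<otimes> c"
    using inv_w_mult_commutes_fixed [OF x] y1 y2 by (simp_all add: c_def)
  then show cw: "c \<otimes> w = w \<otimes> c"
    using commutes_mult [OF y1(1) y2(1) cc] by (simp add: w_def)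
  have "c \<notin> flipped"
    using flipped_not_commute y1_not_involution y1 cc \<open>c \<otimes> y1 = y1 \<otimes> c\<close> by metis
  then have "inv c \<otimes> w = c \<otimes> w" using flipped_inverts [OF w_flipped cc] cw by simp
  then show "c \<otimes> c = \<one>" using cc w_closed inv_eq_self_iff by simp
qed

lemma flipped_sq: "x \<in> flipped \<Longrightarrow> x \<otimes> x = w \<otimes> w"
proof -
  assume x: "x \<in> flipped"
  define c where "c = inv w \<otimes> x"
  have cc: "c \<in> carrier G" and x_eq: "x = w \<otimes> c"
    using flipped_closed [OF x] w_closed by (simp_all add: c_def)
  have "x \<otimes> x = w \<otimes> (c \<otimes> w) \<otimes> c" using cc w_closed by (simp add: x_eq m_assoc)
  also have "\<dots> = w \<otimes> w \<otimes> (c \<otimes> c)"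
    using inv_w_mult_flipped(2) [OF x] cc w_closed by (simp add: c_def [symmetric] m_assoc)
  finally show ?thesis
    using inv_w_mult_flipped(1) [OF x] w_closed by (simp add: c_def [symmetric])
qed

lemma w_sq_sq: "w \<otimes> w \<otimes> (w \<otimes> w) = \<one>"
proof -
  have "inv w \<in> flipped" using inv_flipped_iff w_closed w_flipped by simp
  then have "inv w \<otimes> inv w = w \<otimes> w" by (rule flipped_sq)
  then have "inv (w \<otimes> w) = w \<otimes> w" using w_closed by (simp add: inv_mult_group)
  then show ?thesis using inv_eq_self_iff w_closed by simp
qed

lemma fixed_sq:
  assumes y: "y \<in> carrier G" "y \<notin> flipped" "y \<otimes> y \<noteq> \<one>"
  shows "y \<otimes> y = w \<otimes> w"
proof -
  have wy: "w \<otimes> y \<in> carrier G" using y w_closed by simp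
  have "w \<otimes> y \<notin> flipped"
  proof
    assume "w \<otimes> y \<in> flipped"
    then have "inv w \<otimes> (w \<otimes> y) \<otimes> (inv w \<otimes> (w \<otimes> y)) = \<one>" by (rule inv_w_mult_flipped(1))
    then show False using y w_closed by simp
  qed
  then have "w \<otimes> (w \<otimes> y) = inv (w \<otimes> y) \<otimes> w" using flipped_inverts [OF w_flipped wy] by simp
  then have "w \<otimes> w \<otimes> y = inv y" using y w_closed by (simp add: inv_mult_group m_assoc)
  then have "w \<otimes> w \<otimes> (y \<otimes> y) = \<one>" using y w_closed by (simp add: m_assoc [symmetric])
  then have "y \<otimes> y \<otimes> (w \<otimes> w) = \<one>" using inv_comm y w_closed by simp
  then have "inv (w \<otimes> w) = y \<otimes> y" using y w_closed by (intro inv_equality) simp_all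
  moreover have "inv (w \<otimes> w) = w \<otimes> w" using w_sq_sq inv_eq_self_iff w_closed by simp
  ultimately show ?thesis by simp
qed

lemma fixed_flipped_inverts:
  assumes a: "a \<in> carrier G" "a \<notin> flipped" "a \<otimes> a \<noteq> \<one>" and b: "b \<in> flipped"
  shows "a \<otimes> b = inv b \<otimes> a"
proof -
  have bc: "b \<in> carrier G" and wwc: "w \<otimes> w \<in> carrier G" using flipped_closed [OF b] w_closed by auto
  have inv_a: "inv a = w \<otimes> w \<otimes> a"
    using inv_eq_mult_if_sq [OF a(1) wwc fixed_sq [OF a] w_sq_sq] .
  have inv_b: "inv b = w \<otimes> w \<otimes> b"
    using inv_eq_mult_if_sq [OF bc wwc flipped_sq [OF b] w_sq_sq] .
  have "b \<otimes> a = w \<otimes> w \<otimes> (a \<otimes> b)"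
    using flipped_inverts [OF b a(1,2)] inv_a a bc wwc by (simp add: m_assoc)
  then have "w \<otimes> w \<otimes> (b \<otimes> a) = a \<otimes> b"
    using w_sq_sq a bc wwc by (simp add: m_assoc [symmetric])
  then show ?thesis using inv_b a bc wwc by (simp add: m_assoc)
qed

lemma commute_or_invert_if_fixed_mult_flipped: commute_or_invert
proof (rule commute_or_invert_from_fixed)
  fix a b assume a: "a \<in> carrier G" "a \<notin> flipped" and b: "b \<in> flipped"
  show "a \<otimes> b = b \<otimes> a \<or> a \<otimes> b = inv b \<otimes> a"
  proof (cases "a \<otimes> a = \<one>")
    case True
    then have "inv a = a" using inv_eq_self_iff a by simp
    then show ?thesis using flipped_inverts [OF b a] by simp
  qed (use fixed_flipped_inverts a b in blast)
next
  fix a b assume a: "a \<in> carrier G" "a \<notin> flipped" and b: "b \<in> carrier G" "b \<notin> flipped"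
    and ab: "a \<otimes> b \<notin> flipped"
  have "a \<otimes> b = b \<otimes> a"
    using commute_if_inverted [OF w_closed a(1) b(1)] flipped_inverts [OF w_flipped] a b ab by simp
  then show "a \<otimes> b = b \<otimes> a \<or> a \<otimes> b = inv b \<otimes> a" by simp
qed

end

lemma fixed_mult_fixed:
  assumes "\<not> commute_or_invert"
    and "a \<in> carrier G" "a \<notin> flipped" "b \<in> carrier G" "b \<notin> flipped"
  shows "a \<otimes> b \<notin> flipped"
  using commute_or_invert_if_fixed_mult_flipped [OF assms(2-5) refl] assms(1) by blast

lemma exists_fixed_non_involution:
  assumes "\<not> commute_or_invert"
  obtains y where "y \<in> carrier G" "y \<notin> flipped" "y \<otimes> y \<noteq> \<one>"
  using commute_or_invert_if_fixed_involutions assms by blast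

lemma flipped_mult_flipped:
  assumes ncoi: "\<not> commute_or_invert" and x: "x \<in> flipped" and y: "y \<in> flipped"
  shows "x \<otimes> y \<notin> flipped"
proof
  assume xy: "x \<otimes> y \<in> flipped"
  obtain y0 where y0: "y0 \<in> carrier G" "y0 \<notin> flipped" "y0 \<otimes> y0 \<noteq> \<one>"
    using exists_fixed_non_involution [OF ncoi] .
  have xc: "x \<in> carrier G" and yc: "y \<in> carrier G" using x y flipped_closed by auto
  have "x \<otimes> y \<otimes> y0 = x \<otimes> (inv y0 \<otimes> y)"
    using flipped_inverts [OF y y0(1,2)] xc yc y0 by (simp add: m_assoc)
  also have "\<dots> = y0 \<otimes> (x \<otimes> y)"
    using flipped_inverts [OF x inv_closed [OF y0(1)]] inv_flipped_iff y0 xc yc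
    by (simp add: m_assoc [symmetric])
  finally show False using flipped_not_commute [OF xy y0] by simp
qed

lemma flipped_sq_eq:
  assumes ncoi: "\<not> commute_or_invert" and x: "x \<in> flipped" and x1: "x1 \<in> flipped"
  shows "x \<otimes> x = x1 \<otimes> x1"
proof -
  have xc: "x \<in> carrier G" and x1c: "x1 \<in> carrier G" using x x1 flipped_closed by auto
  define f where "f = inv x1 \<otimes> x"
  have fc: "f \<in> carrier G" and x_eq: "x = x1 \<otimes> f" using xc x1c by (simp_all add: f_def)
  have "f \<notin> flipped"
    using flipped_mult_flipped [OF ncoi _ x] inv_flipped_iff x1c x1 by (simp add: f_def)
  then have "x1 \<otimes> f \<otimes> (x1 \<otimes> f) = x1 \<otimes> x1"
    using sq_mult_inverted [OF x1c fc] flipped_inverts [OF x1 fc] by simp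
  then show ?thesis by (simp add: x_eq)
qed

lemma gen_dicyclic_fixed:
  assumes ncoi: "\<not> commute_or_invert" and x1: "x1 \<in> flipped"
  shows "gen_dicyclic G (carrier G - flipped) (x1 \<otimes> x1)"
proof (intro gen_dicyclic.intro gen_dicyclic_axioms.intro)
  show "subgroup (carrier G - flipped) G"
  proof (rule subgroupI)
    have "\<one> \<notin> flipped" using flipped_not_involution by force
    then show "carrier G - flipped \<noteq> {}" by blast
  qed (use fixed_mult_fixed [OF ncoi] inv_flipped_iff in auto)
  show "x1 \<otimes> x1 \<noteq> \<one>" using flipped_not_involution [OF x1] .
  show "\<exists>x\<in>carrier G. x \<notin> carrier G - flipped" using x1 flipped_closed by blast
  show "x \<otimes> y \<in> carrier G - flipped" if "x \<in> carrier G" "x \<notin> carrier G - flipped"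
    "y \<in> carrier G" "y \<notin> carrier G - flipped" for x y
    using that flipped_mult_flipped [OF ncoi] by simp
  show "x \<otimes> x = x1 \<otimes> x1" if "x \<in> carrier G" "x \<notin> carrier G - flipped" for x
    using that flipped_sq_eq [OF ncoi _ x1] by simp
  show "x \<otimes> a = inv a \<otimes> x" if "x \<in> carrier G" "x \<notin> carrier G - flipped" "a \<in> carrier G - flipped"
    for x a
    using that flipped_inverts by simp
qed (rule is_group)

theorem colour_preserving_cases:
  assumes "\<not> commute_or_invert"
  shows "(\<forall>x\<in>carrier G. h x = x) \<or>
    (\<exists>A z. gen_dicyclic G A z \<and> (\<forall>x\<in>carrier G. h x = invert_outside A x))"
proof (cases "flipped = {}")
  case True
  then show ?thesis using h_fixed by blast
next
  case False
  then obtain x1 where x1: "x1 \<in> flipped" by blast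
  have "h x = invert_outside (carrier G - flipped) x" if "x \<in> carrier G" for x
    using that h_flipped [of x] h_fixed [of x] by (simp add: invert_outside_def)
  then show ?thesis using gen_dicyclic_fixed [OF assms x1] by blast
qed

lemma abelian_cases:
  assumes abelian: "\<And>a b. a \<in> carrier G \<Longrightarrow> b \<in> carrier G \<Longrightarrow> a \<otimes> b = b \<otimes> a"
  shows "(\<forall>x\<in>carrier G. h x = x) \<or> (\<forall>x\<in>carrier G. h x = inv x)"
proof (cases "flipped = {}")
  case True
  then show ?thesis using h_fixed by blast
next
  case False
  then obtain x where x: "x \<in> flipped" by blast
  have "inv y = y" if y: "y \<in> carrier G" "y \<notin> flipped" for y
    using flipped_inverts [OF x y] abelian [OF flipped_closed [OF x] y(1)] flipped_closed [OF x] y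
    by simp
  then show ?thesis using h_flipped h_fixed by (metis flipped_closed)
qed

end

section \<open>Colour-permuting automorphisms of the complete Cayley graph\<close>

locale normalised_colour_map = group G for G (structure) +
  fixes F
  assumes F_bij: "bij_betw F (carrier G) (carrier G)"
    and F_one: "F \<one> = \<one>"
    and F_colour: "\<lbrakk>g \<in> carrier G; s \<in> carrier G\<rbrakk> \<Longrightarrow>
      inv (F g) \<otimes> F (g \<otimes> s) = F s \<or> inv (F g) \<otimes> F (g \<otimes> s) = inv (F s)"
begin

definition F_inv where "F_inv = inv_into (carrier G) F"

definition twist where "twist g Q = inv (F g) \<otimes> F (g \<otimes> F_inv Q)"

lemma F_closed [simp]: "x \<in> carrier G \<Longrightarrow> F x \<in> carrier G"
  using F_bij bij_betwE by blast

lemma F_inv_closed [simp]: "Q \<in> carrier G \<Longrightarrow> F_inv Q \<in> carrier G"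
  unfolding F_inv_def using F_bij by (meson bij_betwE bij_betw_inv_into)

lemma F_F_inv [simp]: "Q \<in> carrier G \<Longrightarrow> F (F_inv Q) = Q"
  unfolding F_inv_def using F_bij by (simp add: bij_betw_inv_into_right)

lemma F_inv_F [simp]: "x \<in> carrier G \<Longrightarrow> F_inv (F x) = x"
  unfolding F_inv_def using F_bij by (simp add: bij_betw_inv_into_left)

lemma F_eq_iff: "x \<in> carrier G \<Longrightarrow> y \<in> carrier G \<Longrightarrow> F x = F y \<longleftrightarrow> x = y"
  by (metis F_inv_F)

lemma twist_closed [simp]: "g \<in> carrier G \<Longrightarrow> Q \<in> carrier G \<Longrightarrow> twist g Q \<in> carrier G"
  by (simp add: twist_def)

lemma F_mult: "g \<in> carrier G \<Longrightarrow> x \<in> carrier G \<Longrightarrow> F (g \<otimes> x) = F g \<otimes> twist g (F x)"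
  by (simp add: twist_def)

lemma twist_colour_preserving:
  assumes g: "g \<in> carrier G"
  shows "colour_preserving (twist g)"
  unfolding colour_preserving_def
proof (intro conjI ballI)
  fix Q assume Q: "Q \<in> carrier G"
  show "twist g Q = Q \<or> twist g Q = inv Q"
    using F_colour [OF g F_inv_closed [OF Q]] Q by (simp add: twist_def)
next
  fix P Q assume P: "P \<in> carrier G" and Q: "Q \<in> carrier G"
  define a s where "a = F_inv P" and "s = inv a \<otimes> F_inv (P \<otimes> Q)"
  have ac: "a \<in> carrier G" and sc: "s \<in> carrier G" using P Q by (simp_all add: a_def s_def)
  have "inv (twist g P) \<otimes> twist g (P \<otimes> Q) = inv (F (g \<otimes> a)) \<otimes> F ((g \<otimes> a) \<otimes> s)"
    using g P Q by (simp add: twist_def a_def s_def inv_mult_group m_assoc)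
  moreover have "F s = Q \<or> F s = inv Q"
  proof -
    have "inv (F a) \<otimes> F (a \<otimes> s) = Q" using P Q by (simp add: a_def s_def)
    then show ?thesis using F_colour [OF ac sc] sc Q by auto
  qed
  ultimately show "inv (twist g P) \<otimes> twist g (P \<otimes> Q) = Q \<or> inv (twist g P) \<otimes> twist g (P \<otimes> Q) = inv Q"
    using F_colour [OF m_closed [OF g ac] sc] Q by auto
qed

lemma twist_mult:
  assumes g: "g \<in> carrier G" and x: "x \<in> carrier G" and Y: "Y \<in> carrier G"
    and hom: "\<And>U V. U \<in> carrier G \<Longrightarrow> V \<in> carrier G \<Longrightarrow> twist g (U \<otimes> V) = twist g U \<otimes> twist g V"
  shows "twist (g \<otimes> x) Y = twist g (twist x Y)"
proof -
  define y where "y = F_inv Y"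
  have yc: "y \<in> carrier G" and Fy: "F y = Y" using Y by (simp_all add: y_def)
  have "F g \<otimes> twist g (F x) \<otimes> twist (g \<otimes> x) Y = F ((g \<otimes> x) \<otimes> y)"
    using F_mult [of "g \<otimes> x" y] F_mult [OF g x] g x yc Fy by simp
  also have "\<dots> = F g \<otimes> twist g (F x \<otimes> twist x Y)"
    using F_mult [OF g] F_mult [OF x yc] Fy g x yc by (simp add: m_assoc)
  also have "\<dots> = F g \<otimes> twist g (F x) \<otimes> twist g (twist x Y)"
    using hom g x Y by (simp add: m_assoc)
  finally show ?thesis using g x Y by simp
qed

lemma twist_cases:
  assumes "\<not> commute_or_invert" and g: "g \<in> carrier G"
  shows "(\<forall>Y\<in>carrier G. twist g Y = Y) \<or>
    (\<exists>A z. gen_dicyclic G A z \<and> (\<forall>Y\<in>carrier G. twist g Y = invert_outside A Y))"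
proof -
  interpret colour_preserving_map G "twist g"
    using twist_colour_preserving [OF g] by unfold_locales
  show ?thesis using colour_preserving_cases [OF assms(1)] .
qed

end

locale dicyclic_twisted = normalised_colour_map G F + gen_dicyclic G A z
  for G (structure) and F A z +
  assumes twist_id_or_invert_outside: "g \<in> carrier G \<Longrightarrow>
      (\<forall>Y\<in>carrier G. twist g Y = Y) \<or> (\<forall>Y\<in>carrier G. twist g Y = invert_outside A Y)"
    and twist_nontrivial: "\<exists>g\<in>carrier G. \<exists>Y\<in>carrier G. twist g Y \<noteq> Y"
begin

definition untwisted where "untwisted = {g \<in> carrier G. \<forall>Y\<in>carrier G. twist g Y = Y}"

lemma twist_untwisted: "g \<in> untwisted \<Longrightarrow> Y \<in> carrier G \<Longrightarrow> twist g Y = Y"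
  by (simp add: untwisted_def)

lemma twist_twisted:
  assumes "g \<in> carrier G" "g \<notin> untwisted" "Y \<in> carrier G"
  shows "twist g Y = invert_outside A Y"
  using twist_id_or_invert_outside [OF assms(1)] assms unfolding untwisted_def by blast

lemma twist_hom:
  assumes g: "g \<in> carrier G" and U: "U \<in> carrier G" and V: "V \<in> carrier G"
  shows "twist g (U \<otimes> V) = twist g U \<otimes> twist g V"
  using twist_id_or_invert_outside [OF g]
proof
  assume "\<forall>Y\<in>carrier G. twist g Y = invert_outside A Y"
  then show ?thesis using invert_outside_mult [OF U V] U V by simp
qed (use U V in simp)

lemma twist_in_A_iff:
  assumes g: "g \<in> carrier G" and Y: "Y \<in> carrier G"
  shows "twist g Y \<in> A \<longleftrightarrow> Y \<in> A"
  using twist_id_or_invert_outside [OF g]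
proof
  assume "\<forall>Y\<in>carrier G. twist g Y = invert_outside A Y"
  then show ?thesis using invert_outside_in_A_iff [OF Y] Y by simp
qed (use Y in simp)

lemma mult_untwisted_iff:
  assumes g: "g \<in> carrier G" and x: "x \<in> carrier G"
  shows "g \<otimes> x \<in> untwisted \<longleftrightarrow> (g \<in> untwisted \<longleftrightarrow> x \<in> untwisted)"
proof -
  obtain y where y: "y \<in> carrier G" "y \<notin> A" using A_proper by blast
  have gx: "g \<otimes> x \<in> carrier G" using g x by simp
  have twist_gx: "twist (g \<otimes> x) Y = twist g (twist x Y)" if "Y \<in> carrier G" for Y
    using twist_mult [OF g x that twist_hom [OF g]] .
  have not_untwisted: "g \<otimes> x \<notin> untwisted" if "twist (g \<otimes> x) y \<noteq> y"
    using that y(1) twist_untwisted by blast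
  consider "g \<in> untwisted" "x \<in> untwisted" | "g \<in> untwisted" "x \<notin> untwisted"
    | "g \<notin> untwisted" "x \<in> untwisted" | "g \<notin> untwisted" "x \<notin> untwisted" by blast
  then show ?thesis
  proof cases
    case 1
    then have "\<forall>Y\<in>carrier G. twist (g \<otimes> x) Y = Y" using twist_gx twist_untwisted by simp
    then show ?thesis using 1 gx unfolding untwisted_def by blast
  next
    case 2
    then have "twist (g \<otimes> x) y \<noteq> y"
      using twist_gx [OF y(1)] twist_untwisted [OF 2(1)] twist_twisted [OF x 2(2)]
        invert_outside_neq [OF y] y(1) by simp
    then show ?thesis using 2 not_untwisted by blast
  next
    case 3
    then have "twist (g \<otimes> x) y \<noteq> y"
      using twist_gx [OF y(1)] twist_untwisted [OF 3(2)] twist_twisted [OF g 3(1)]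
        invert_outside_neq [OF y] y(1) by simp
    then show ?thesis using 3 not_untwisted by blast
  next
    case 4
    then have "\<forall>Y\<in>carrier G. twist (g \<otimes> x) Y = Y"
      using twist_gx twist_twisted [OF g 4(1)] twist_twisted [OF x 4(2)] invert_outside_involutive
      by simp
    then show ?thesis using 4 gx unfolding untwisted_def by blast
  qed
qed

lemma F_mult_in_A_iff:
  assumes "g \<in> carrier G" "x \<in> carrier G"
  shows "F (g \<otimes> x) \<in> A \<longleftrightarrow> (F g \<in> A \<longleftrightarrow> F x \<in> A)"
  using F_mult [OF assms] mult_in_A_iff twist_in_A_iff assms by simp

text \<open>\<open>aligned\<close> is a multiplicative parity (\<open>aligned_mult\<close>) that turns out to be membership
  in \<open>A\<close>.\<close>

definition aligned where "aligned g \<longleftrightarrow> (g \<in> untwisted \<longleftrightarrow> F g \<in> A)"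

lemma aligned_mult:
  assumes "g \<in> carrier G" "x \<in> carrier G"
  shows "aligned (g \<otimes> x) \<longleftrightarrow> (aligned g \<longleftrightarrow> aligned x)"
  using mult_untwisted_iff [OF assms] F_mult_in_A_iff [OF assms] unfolding aligned_def by blast

lemma in_A_if_twisted_outside:
  assumes g: "g \<in> carrier G" "g \<notin> untwisted" "F g \<notin> A"
  shows "g \<in> A"
proof (rule ccontr)
  assume "g \<notin> A"
  have "F (g \<otimes> g) = F g \<otimes> inv (F g)"
    using F_mult [OF g(1) g(1)] twist_twisted [OF g(1,2)] g by (simp add: invert_outside_def)
  then have "F (g \<otimes> g) = F \<one>" using g F_one by simp
  then have "g \<otimes> g = \<one>" using F_eq_iff g by simp
  then show False using outside_sq [OF g(1) \<open>g \<notin> A\<close>] z_neq_one by simp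
qed

lemma exists_twisted_outside: "\<exists>p\<in>carrier G. p \<notin> untwisted \<and> F p \<notin> A"
proof (rule ccontr)
  assume none: "\<not> ?thesis"
  obtain g where g: "g \<in> carrier G" "g \<notin> untwisted"
    using twist_nontrivial by (auto simp: untwisted_def)
  obtain y where y: "y \<in> carrier G" "y \<notin> A" using A_proper by blast
  define x where "x = F_inv y"
  have x: "x \<in> carrier G" "F x = y" using y by (simp_all add: x_def)
  have "F g \<in> A" "x \<in> untwisted" using none g x y by auto
  then have "g \<otimes> x \<notin> untwisted" "F (g \<otimes> x) \<notin> A"
    using mult_untwisted_iff [OF g(1) x(1)] F_mult_in_A_iff [OF g(1) x(1)] g x y by simp_all
  then show False using none g x by blast
qed

lemma in_A_if_aligned:
  assumes g: "g \<in> carrier G" and "aligned g"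
  shows "g \<in> A"
proof -
  obtain p where p: "p \<in> carrier G" "p \<notin> untwisted" "F p \<notin> A" using exists_twisted_outside by blast
  show ?thesis
  proof (cases "g \<in> untwisted")
    case False
    then show ?thesis using in_A_if_twisted_outside g \<open>aligned g\<close> by (simp add: aligned_def)
  next
    case True
    have "aligned (p \<otimes> g)" using aligned_mult [OF p(1) g] p \<open>aligned g\<close> by (simp add: aligned_def)
    moreover have "p \<otimes> g \<notin> untwisted" using mult_untwisted_iff [OF p(1) g] p True by simp
    ultimately have "p \<otimes> g \<in> A" using in_A_if_twisted_outside p g by (simp add: aligned_def)
    then show ?thesis using mult_in_A_iff [OF p(1) g] in_A_if_twisted_outside [OF p] by simp
  qed
qed

lemma aligned_if_in_A:
  assumes a: "a \<in> A"
  shows "aligned a"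
proof (rule ccontr)
  assume "\<not> aligned a"
  obtain y where y: "y \<in> carrier G" "y \<notin> A" using A_proper by blast
  have ac: "a \<in> carrier G" using A_closed [OF a] .
  have "\<not> aligned y" using in_A_if_aligned y by blast
  then have "aligned (a \<otimes> y)" using aligned_mult [OF ac y(1)] \<open>\<not> aligned a\<close> by simp
  then have "a \<otimes> y \<in> A" using in_A_if_aligned ac y by simp
  then show False using mult_in_A_iff [OF ac y(1)] a y by simp
qed

lemma exists_untwisted_outside: "\<exists>k\<in>untwisted. F k \<notin> A"
proof (rule ccontr)
  assume "\<not> ?thesis"
  then have F_untwisted: "F k \<in> A" if "k \<in> untwisted" for k using that by blast
  have untwisted_carrier: "k \<in> carrier G" if "k \<in> untwisted" for k
    using that by (simp add: untwisted_def)
  have untwisted_A: "k \<in> A" if "k \<in> untwisted" for k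
    using in_A_if_aligned F_untwisted untwisted_carrier that by (simp add: aligned_def)
  have A_untwisted: "a \<in> untwisted" if a: "a \<in> A" for a
  proof (rule ccontr)
    assume "a \<notin> untwisted"
    obtain y where y: "y \<in> carrier G" "y \<notin> A" using A_proper by blast
    have ac: "a \<in> carrier G" using A_closed [OF a] .
    have "a \<otimes> y \<in> untwisted" using mult_untwisted_iff [OF ac y(1)] \<open>a \<notin> untwisted\<close> untwisted_A y by blast
    then show False using untwisted_A mult_in_A_iff [OF ac y(1)] a y by blast
  qed
  have "F g \<in> A" if g: "g \<in> carrier G" for g
  proof (cases "g \<in> untwisted")
    case False
    then have "\<not> aligned g" using aligned_if_in_A A_untwisted in_A_if_aligned g by blast
    then show ?thesis using False by (simp add: aligned_def)
  qed (rule F_untwisted)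
  moreover obtain y where "y \<in> carrier G" "y \<notin> A" using A_proper by blast
  ultimately show False using F_F_inv F_inv_closed by metis
qed

lemma F_z: "F z = z"
proof -
  obtain k where k: "k \<in> untwisted" "F k \<notin> A" using exists_untwisted_outside by blast
  have kc: "k \<in> carrier G" using k by (simp add: untwisted_def)
  have "k \<notin> A" using aligned_if_in_A k by (auto simp: aligned_def)
  have "F (k \<otimes> k) = F k \<otimes> F k" using F_mult [OF kc kc] twist_untwisted [OF k(1)] kc by simp
  then show ?thesis using outside_sq [OF kc \<open>k \<notin> A\<close>] outside_sq [OF F_closed [OF kc] k(2)] by simp
qed

lemma A_sq:
  assumes E: "E \<in> A"
  shows "E \<otimes> E = \<one> \<or> E \<otimes> E = z"
proof -
  have Ec: "E \<in> carrier G" using A_closed [OF E] .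
  define g where "g = F_inv E"
  have gc: "g \<in> carrier G" and Fg: "F g = E" using Ec by (simp_all add: g_def)
  show ?thesis
  proof (cases "g \<in> untwisted")
    case True
    obtain p where p: "p \<in> carrier G" "p \<notin> untwisted" "F p \<notin> A" using exists_twisted_outside by blast
    have "p \<in> A" using in_A_if_twisted_outside [OF p] .
    have "g \<in> A" using in_A_if_aligned [OF gc] True Fg E by (simp add: aligned_def)
    have "F p \<otimes> E = F (p \<otimes> g)"
      using F_mult [OF p(1) gc] twist_twisted [OF p(1,2)] Fg E Ec by (simp add: invert_outside_def)
    also have "\<dots> = F (g \<otimes> p)" using A_comm [OF \<open>p \<in> A\<close> \<open>g \<in> A\<close>] by simp
    also have "\<dots> = E \<otimes> F p" using F_mult [OF gc p(1)] twist_untwisted [OF True] Fg p(1) by simp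
    finally have "inv E \<otimes> F p = E \<otimes> F p" using outside_inverts [OF F_closed [OF p(1)] p(3) E] by simp
    then show ?thesis using inv_eq_self_iff Ec p(1) by simp
  next
    case False
    have "g \<notin> A" using aligned_if_in_A False Fg E by (auto simp: aligned_def)
    have "F (g \<otimes> g) = E \<otimes> E"
      using F_mult [OF gc gc] twist_twisted [OF gc False] Fg E Ec by (simp add: invert_outside_def)
    then show ?thesis using outside_sq [OF gc \<open>g \<notin> A\<close>] F_z by simp
  qed
qed

theorem commute_or_invert_if_twisted: commute_or_invert
  using commute_or_invert_if_sq A_sq by blast

end

context normalised_colour_map
begin

lemma twist_trivial_if_not_commute_or_invert:
  assumes ncoi: "\<not> commute_or_invert" and g: "g \<in> carrier G" and Y: "Y \<in> carrier G"
  shows "twist g Y = Y"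
proof (rule ccontr)
  assume ne: "twist g Y \<noteq> Y"
  then obtain A z where d: "gen_dicyclic G A z"
    using twist_cases [OF ncoi g] Y by blast
  have alt: "(\<forall>Y\<in>carrier G. twist x Y = Y) \<or> (\<forall>Y\<in>carrier G. twist x Y = invert_outside A Y)"
    if x: "x \<in> carrier G" for x
    using twist_cases [OF ncoi x]
  proof
    assume "\<exists>A' z'. gen_dicyclic G A' z' \<and> (\<forall>Y\<in>carrier G. twist x Y = invert_outside A' Y)"
    then obtain A' z' where d': "gen_dicyclic G A' z'"
      and twist_x: "\<forall>Y\<in>carrier G. twist x Y = invert_outside A' Y" by blast
    have "A' = A" using gen_dicyclic.commute_or_invert_if_other [OF d d'] ncoi by blast
    then show ?thesis using twist_x by blast
  qed blast
  interpret dicyclic_twisted G F A z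
  proof (rule dicyclic_twisted.intro [OF normalised_colour_map_axioms d])
    show "dicyclic_twisted_axioms G F A"
    proof (rule dicyclic_twisted_axioms.intro)
      show "\<exists>g\<in>carrier G. \<exists>Y\<in>carrier G. twist g Y \<noteq> Y" using ne g Y by blast
    qed (rule alt)
  qed
  show False using commute_or_invert_if_twisted ncoi by blast
qed

lemma F_inv_if_twist_trivial:
  assumes x: "x \<in> carrier G" and triv: "\<forall>Y\<in>carrier G. twist x Y = Y"
  shows "F (inv x) = inv (F x)"
proof -
  have "F x \<otimes> F (inv x) = \<one>" using F_mult [OF x inv_closed [OF x]] triv x F_one by simp
  then have "F (inv x) \<otimes> F x = \<one>" using inv_comm x by simp
  then show ?thesis using inv_equality x by simp
qed

lemma twist_not_inversion:
  assumes x: "x \<in> carrier G" "inv x \<noteq> x"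
  shows "\<not> (\<forall>Y\<in>carrier G. twist x Y = inv Y)"
proof
  assume "\<forall>Y\<in>carrier G. twist x Y = inv Y"
  then have "F x \<otimes> inv (F (inv x)) = \<one>" using F_mult [OF x(1) inv_closed [OF x(1)]] x F_one by simp
  then have "F (inv x) = F x" using inv_solve_right' [of \<one> "F x" "F (inv x)"] x(1) by simp
  then show False using F_eq_iff x by simp
qed

lemma twist_trivial_if_abelian:
  assumes abelian: "\<And>a b. a \<in> carrier G \<Longrightarrow> b \<in> carrier G \<Longrightarrow> a \<otimes> b = b \<otimes> a"
    and g: "g \<in> carrier G" and Y: "Y \<in> carrier G"
  shows "twist g Y = Y"
proof (rule ccontr)
  assume ne: "twist g Y \<noteq> Y"
  have cases: "(\<forall>Y\<in>carrier G. twist x Y = Y) \<or> (\<forall>Y\<in>carrier G. twist x Y = inv Y)"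
    if "x \<in> carrier G" for x
  proof -
    interpret colour_preserving_map G "twist x"
      using twist_colour_preserving [OF that] by unfold_locales
    show ?thesis using abelian_cases [OF abelian] .
  qed
  have twist_g: "\<forall>Y\<in>carrier G. twist g Y = inv Y" using cases [OF g] ne Y by blast
  then have "inv Y \<noteq> Y" using ne Y by simp
  then have twist_Y: "\<forall>Q\<in>carrier G. twist Y Q = Q" using cases [OF Y] twist_not_inversion Y by blast
  have "F Y \<otimes> F g = F g \<otimes> inv (F Y)"
    using F_mult [OF Y g] F_mult [OF g Y] twist_g twist_Y abelian [OF g Y] g Y by simp
  then have "inv (F Y) = F Y" using abelian [of "F g" "F Y"] g Y by simp
  then have "F (inv Y) = F Y" using F_inv_if_twist_trivial [OF Y twist_Y] by simp
  then show False using F_eq_iff \<open>inv Y \<noteq> Y\<close> Y by simp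
qed

theorem hom_or_hamiltonian: "F \<in> hom G G \<or> hamiltonian_2group G"
proof (cases "commute_or_invert \<and> \<not> (\<forall>a\<in>carrier G. \<forall>b\<in>carrier G. a \<otimes> b = b \<otimes> a)")
  case True
  then show ?thesis using hamiltonian_if_commute_or_invert by blast
next
  case False
  then have "twist g Y = Y" if "g \<in> carrier G" "Y \<in> carrier G" for g Y
    using twist_trivial_if_not_commute_or_invert twist_trivial_if_abelian that by blast
  then have "F \<in> hom G G" by (intro homI) (simp_all add: F_mult)
  then show ?thesis ..
qed

end

lemma (in group) bij_betw_mult_left:
  assumes "a \<in> carrier G" and "bij_betw \<phi> (carrier G) (carrier G)"
  shows "bij_betw (\<lambda>x. a \<otimes> \<phi> x) (carrier G) (carrier G)"
proof -
  have "bij_betw (\<lambda>y. a \<otimes> y) (carrier G) (carrier G)"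
    by (rule bij_betw_byWitness [where f' = "\<lambda>y. inv a \<otimes> y"]) (use assms(1) in auto)
  then show ?thesis using bij_betw_trans [OF assms(2)] by (simp add: o_def)
qed

lemma (in group) normalised_colour_map_if_colour_permuting:
  assumes aut: "cay_graph_aut G (carrier G - {\<one>}) \<phi>" and cp: "colour_permuting G (carrier G - {\<one>}) \<phi>"
  shows "normalised_colour_map G (\<lambda>x. inv (\<phi> \<one>) \<otimes> \<phi> x)"
proof -
  have bij: "bij_betw \<phi> (carrier G) (carrier G)" using aut by (simp add: cay_graph_aut_def)
  have \<phi>_closed: "\<phi> x \<in> carrier G" if "x \<in> carrier G" for x using bij that bij_betwE by blast
  have colour: "inv (inv (\<phi> \<one>) \<otimes> \<phi> a) \<otimes> (inv (\<phi> \<one>) \<otimes> \<phi> b) = inv (\<phi> a) \<otimes> \<phi> b"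
    if "a \<in> carrier G" "b \<in> carrier G" for a b
    using \<phi>_closed that by (simp add: inv_mult_group m_assoc)
  show ?thesis
  proof unfold_locales
    show "bij_betw (\<lambda>x. inv (\<phi> \<one>) \<otimes> \<phi> x) (carrier G) (carrier G)"
      using bij_betw_mult_left [OF inv_closed [OF \<phi>_closed [OF one_closed]] bij] .
    show "inv (\<phi> \<one>) \<otimes> \<phi> \<one> = \<one>" using \<phi>_closed by simp
  next
    fix g s assume g: "g \<in> carrier G" and s: "s \<in> carrier G"
    show "inv (inv (\<phi> \<one>) \<otimes> \<phi> g) \<otimes> (inv (\<phi> \<one>) \<otimes> \<phi> (g \<otimes> s)) = inv (\<phi> \<one>) \<otimes> \<phi> s \<or>
        inv (inv (\<phi> \<one>) \<otimes> \<phi> g) \<otimes> (inv (\<phi> \<one>) \<otimes> \<phi> (g \<otimes> s)) = inv (inv (\<phi> \<one>) \<otimes> \<phi> s)"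
    proof (cases "s = \<one>")
      case False
      have "cay_colour G \<one> s = cay_colour G g (g \<otimes> s)"
        using g s by (simp add: cay_colour_def m_assoc [symmetric])
      moreover have "cay_adj G (carrier G - {\<one>}) \<one> s" "cay_adj G (carrier G - {\<one>}) g (g \<otimes> s)"
        using g s False by (auto simp: cay_adj_def)
      ultimately have "cay_colour G (\<phi> g) (\<phi> (g \<otimes> s)) = cay_colour G (\<phi> \<one>) (\<phi> s)"
        using cp unfolding colour_permuting_def by blast
      moreover have "inv (\<phi> g) \<otimes> \<phi> (g \<otimes> s) \<in> cay_colour G (\<phi> g) (\<phi> (g \<otimes> s))"
        by (simp add: cay_colour_def)
      ultimately have "inv (\<phi> g) \<otimes> \<phi> (g \<otimes> s) \<in> {inv (\<phi> \<one>) \<otimes> \<phi> s, inv (inv (\<phi> \<one>) \<otimes> \<phi> s)}"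
        by (simp add: cay_colour_def)
      then show ?thesis using colour [OF g m_closed [OF g s]] by simp
    qed (use g \<phi>_closed in simp)
  qed
qed

lemma (in group) affine_if_normalised_hom:
  assumes bij: "bij_betw \<phi> (carrier G) (carrier G)" and hom: "(\<lambda>x. inv (\<phi> \<one>) \<otimes> \<phi> x) \<in> hom G G"
  shows "affine_map G \<phi>"
proof -
  define F where "F = (\<lambda>x. inv (\<phi> \<one>) \<otimes> \<phi> x)"
  have c: "\<phi> \<one> \<in> carrier G" using bij_betwE [OF bij] one_closed by blast
  have bij_F: "bij_betw F (carrier G) (carrier G)"
    unfolding F_def using bij_betw_mult_left [OF inv_closed [OF c] bij] .
  then have iso: "F \<in> iso G G" using hom by (simp add: iso_def F_def)
  have "\<phi> \<one> \<in> F ` carrier G" using bij_F c by (simp add: bij_betw_def)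
  then obtain g where g_eq: "\<phi> \<one> = F g" and g: "g \<in> carrier G" by (rule imageE)
  have \<phi>_eq: "\<phi> x = F (g \<otimes> x)" if x: "x \<in> carrier G" for x
  proof -
    have "F (g \<otimes> x) = \<phi> \<one> \<otimes> F x" using hom_mult [OF hom [folded F_def] g x] g_eq by simp
    moreover have "\<phi> x \<in> carrier G" using bij x bij_betwE by blast
    ultimately show ?thesis using c by (simp add: F_def)
  qed
  show ?thesis
    unfolding affine_map_def using iso g \<phi>_eq by (intro exI [of _ F] exI [of _ g]) simp
qed

theorem corollary4p8:
  fixes G :: "('a, 'c) monoid_scheme"
  assumes "group G"
    and "\<not> hamiltonian_2group G"
  shows "strongly_CCA G (carrier G - {\<one>\<^bsub>G\<^esub>})"
  unfolding strongly_CCA_def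
proof (intro allI impI, elim conjE)
  interpret group G by fact
  fix \<phi>
  assume aut: "cay_graph_aut G (carrier G - {\<one>\<^bsub>G\<^esub>}) \<phi>"
    and cp: "colour_permuting G (carrier G - {\<one>\<^bsub>G\<^esub>}) \<phi>"
  interpret normalised_colour_map G "\<lambda>x. inv\<^bsub>G\<^esub> (\<phi> \<one>\<^bsub>G\<^esub>) \<otimes>\<^bsub>G\<^esub> \<phi> x"
    using normalised_colour_map_if_colour_permuting [OF aut cp] .
  have "(\<lambda>x. inv\<^bsub>G\<^esub> (\<phi> \<one>\<^bsub>G\<^esub>) \<otimes>\<^bsub>G\<^esub> \<phi> x) \<in> hom G G"
    using hom_or_hamiltonian assms(2) by blast
  then show "affine_map G \<phi>"
    using affine_if_normalised_hom aut by (simp add: cay_graph_aut_def)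
qed

end
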